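(* Let $G$ be a torsion-free group acting $\kappa$-acylindrically on a simplicial tree $T$, let $X$ be a graph with an isometric $G$-action, and let $\pi:X\to T$ be a $G$-equivariant $1$-Lipschitz map. Let $g,h\in G$ be loxodromic for the action on $T$, with axes $\alpha_g,\alpha_h$, and suppose $g$ and $h$ have no common nontrivial power. Choose a vertex $x_0\in\pi^{-1}(\alpha_g)$ with $d_X(gx_0,x_0)=\min\{d_X(gx,x): x\in\pi^{-1}(\alpha_g)\}$, choose a vertex $y_0\in\pi^{-1}(\alpha_h)$, and set $A(g)=\{g^nx_0\}_{n\in\mathbf{Z}}$ and $A(h)=\{h^ny_0\}_{n\in\mathbf{Z}}$. Then for each $\epsilon>0$ there is a constant $K$, depending only on $\epsilon$, $\kappa$ and the conjugacy classes of $g$ and $h$, such that $\mathrm{diam}_X(N_\epsilon(A(g))\cap A(h))\le K$.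
   Context: An action on a simplicial tree is $\kappa$-acylindrical if the pointwise stabiliser of every edge path of length at least $\kappa+1$ is trivial. The axis $\alpha_g$ of a loxodromic $g$ is its invariant bi-infinite geodesic. $N_\epsilon(\cdot)$ denotes the closed $\epsilon$-neighbourhood in $X$. Common nontrivial power: $g^m=h^n\neq1$ for some integers $m,n$. *)

theory Defs
  imports Complex_Main "HOL-Algebra.Group_Action" "HOL-Library.Extended_Real"
begin

text \<open>Graphs are given by an adjacency relation on a vertex type (all of the type).\<close>

definition is_walk :: "('v \<Rightarrow> 'v \<Rightarrow> bool) \<Rightarrow> 'v list \<Rightarrow> bool" where
  "is_walk E xs \<longleftrightarrow> xs \<noteq> [] \<and> (\<forall>i. Suc i < length xs \<longrightarrow> E (xs ! i) (xs ! Suc i))"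

definition gconnected :: "('v \<Rightarrow> 'v \<Rightarrow> bool) \<Rightarrow> bool" where
  "gconnected E \<longleftrightarrow> (\<forall>x y. \<exists>xs. is_walk E xs \<and> hd xs = x \<and> last xs = y)"

text \<open>Combinatorial (path) distance between vertices; equals the distance in the
  metric graph between vertices.\<close>
definition gdist :: "('v \<Rightarrow> 'v \<Rightarrow> bool) \<Rightarrow> 'v \<Rightarrow> 'v \<Rightarrow> nat" where
  "gdist E x y = (LEAST n. \<exists>xs. is_walk E xs \<and> hd xs = x \<and> last xs = y \<and> length xs = Suc n)"

definition sym_graph :: "('v \<Rightarrow> 'v \<Rightarrow> bool) \<Rightarrow> bool" where
  "sym_graph E \<longleftrightarrow> (\<forall>x y. E x y \<longrightarrow> E y x)"

definition simplicial_tree :: "('v \<Rightarrow> 'v \<Rightarrow> bool) \<Rightarrow> bool" where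
  "simplicial_tree E \<longleftrightarrow> sym_graph E \<and> (\<forall>x. \<not> E x x) \<and> gconnected E \<and>
     \<not> (\<exists>xs. is_walk E xs \<and> distinct xs \<and> 3 \<le> length xs \<and> E (last xs) (hd xs))"

definition graph_aut_action :: "('g, 'm) monoid_scheme \<Rightarrow> ('g \<Rightarrow> 'v \<Rightarrow> 'v) \<Rightarrow> ('v \<Rightarrow> 'v \<Rightarrow> bool) \<Rightarrow> bool" where
  "graph_aut_action G \<phi> E \<longleftrightarrow> group_action G UNIV \<phi> \<and>
     (\<forall>g\<in>carrier G. \<forall>u v. E (\<phi> g u) (\<phi> g v) \<longleftrightarrow> E u v)"

text \<open>kappa-acylindricity: pointwise stabiliser of every (reduced) edge path of length
  at least kappa+1 (i.e. at least kappa+2 vertices) is trivial.\<close>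
definition acylindrical :: "('g, 'm) monoid_scheme \<Rightarrow> ('g \<Rightarrow> 'v \<Rightarrow> 'v) \<Rightarrow> ('v \<Rightarrow> 'v \<Rightarrow> bool) \<Rightarrow> nat \<Rightarrow> bool" where
  "acylindrical G \<phi> E \<kappa> \<longleftrightarrow>
     (\<forall>xs. is_walk E xs \<and> distinct xs \<and> \<kappa> + 2 \<le> length xs \<longrightarrow>
        (\<forall>g\<in>carrier G. (\<forall>v\<in>set xs. \<phi> g v = v) \<longrightarrow> g = \<one>\<^bsub>G\<^esub>))"

definition torsion_free :: "('g, 'm) monoid_scheme \<Rightarrow> bool" where
  "torsion_free G \<longleftrightarrow> (\<forall>x\<in>carrier G. x \<noteq> \<one>\<^bsub>G\<^esub> \<longrightarrow> (\<forall>n::nat. 0 < n \<longrightarrow> x [^]\<^bsub>G\<^esub> n \<noteq> \<one>\<^bsub>G\<^esub>))"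

text \<open>Geometric realization of a graph: points are given by barycentric coordinates,
  supported on a vertex or on an edge.\<close>
definition realization :: "('v \<Rightarrow> 'v \<Rightarrow> bool) \<Rightarrow> ('v \<Rightarrow> real) set" where
  "realization E = {f. (\<exists>u. f = (\<lambda>w. if w = u then 1 else 0)) \<or>
      (\<exists>u v t. E u v \<and> 0 < t \<and> t < 1 \<and> f = (\<lambda>w. if w = u then 1 - t else if w = v then t else 0))}"

definition supp :: "('v \<Rightarrow> real) \<Rightarrow> 'v set" where
  "supp f = {w. f w \<noteq> 0}"

text \<open>Path metric of the realization (of a tree): for points in a common closed edge it
  is the difference of positions, otherwise geodesics leave through endpoints.\<close>
definition tdist :: "('v \<Rightarrow> 'v \<Rightarrow> bool) \<Rightarrow> ('v \<Rightarrow> real) \<Rightarrow> ('v \<Rightarrow> real) \<Rightarrow> real" where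
  "tdist E f g =
     (if \<exists>u v. (u = v \<or> E u v) \<and> supp f \<subseteq> {u, v} \<and> supp g \<subseteq> {u, v}
      then (\<Sum>w\<in>supp f \<union> supp g. \<bar>f w - g w\<bar>) / 2
      else Min {(1 - f a) + real (gdist E a b) + (1 - g b) | a b. a \<in> supp f \<and> b \<in> supp g})"

definition act_pt :: "('g, 'm) monoid_scheme \<Rightarrow> ('g \<Rightarrow> 'v \<Rightarrow> 'v) \<Rightarrow> 'g \<Rightarrow> ('v \<Rightarrow> real) \<Rightarrow> ('v \<Rightarrow> real)" where
  "act_pt G \<phi> g f = (\<lambda>w. f (\<phi> (inv\<^bsub>G\<^esub> g) w))"

definition bi_infinite_geodesic :: "('v \<Rightarrow> 'v \<Rightarrow> bool) \<Rightarrow> ('v \<Rightarrow> real) set \<Rightarrow> bool" where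
  "bi_infinite_geodesic E A \<longleftrightarrow>
     (\<exists>\<gamma>::real \<Rightarrow> ('v \<Rightarrow> real). (\<forall>s. \<gamma> s \<in> realization E) \<and>
        (\<forall>s t. tdist E (\<gamma> s) (\<gamma> t) = \<bar>s - t\<bar>) \<and> A = range \<gamma>)"

definition loxodromic :: "('g, 'm) monoid_scheme \<Rightarrow> ('g \<Rightarrow> 'v \<Rightarrow> 'v) \<Rightarrow> ('v \<Rightarrow> 'v \<Rightarrow> bool) \<Rightarrow> 'g \<Rightarrow> bool" where
  "loxodromic G \<phi> E g \<longleftrightarrow> (INF p\<in>realization E. tdist E p (act_pt G \<phi> g p)) > 0"

definition is_axis :: "('g, 'm) monoid_scheme \<Rightarrow> ('g \<Rightarrow> 'v \<Rightarrow> 'v) \<Rightarrow> ('v \<Rightarrow> 'v \<Rightarrow> bool) \<Rightarrow> 'g \<Rightarrow> ('v \<Rightarrow> real) set \<Rightarrow> bool" where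
  "is_axis G \<phi> E g A \<longleftrightarrow> bi_infinite_geodesic E A \<and> act_pt G \<phi> g ` A = A"

definition graph_diam :: "('v \<Rightarrow> 'v \<Rightarrow> bool) \<Rightarrow> 'v set \<Rightarrow> ereal" where
  "graph_diam E S = (SUP x\<in>S. SUP y\<in>S. ereal (real (gdist E x y)))"

end

theory Submission
  imports Defs
begin

text \<open>The path metric of the realization of the tree is computed in coordinates relative to a
  root; it satisfies the four-point condition, so geodesic lines behave as in an \<open>\<real>\<close>-tree, and a
  loxodromic element translates its axis by a nonzero integer. If an \<open>h\<close>-orbit point is
  \<open>\<epsilon>\<close>-close to \<open>g\<^sup>m\<^sup>1 x\<^sub>0\<close> and another one to \<open>g\<^sup>m\<^sup>2 x\<^sub>0\<close>, the projections to the tree show that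
  the two axes run together for about \<open>\<bar>m\<^sub>2 - m\<^sub>1\<bar> \<tau>\<^sub>g\<close>. On a long common stretch a suitable product
  \<open>g\<^sup>n h\<^sup>-\<^sup>e\<^sup>m\<close> fixes two points at distance more than \<open>\<kappa> + 2\<close>; its square then fixes an edge
  path of length more than \<open>\<kappa>\<close>, so acylindricity and torsion-freeness give \<open>g\<^sup>n = h\<^sup>e\<^sup>m\<close>,
  a common nontrivial power. Hence \<open>\<bar>m\<^sub>2 - m\<^sub>1\<bar>\<close> is bounded by the translation length of \<open>h\<close>, the
  displacement of \<open>x\<^sub>0\<close>, \<open>\<epsilon>\<close> and \<open>\<kappa>\<close>, and the minimality of \<open>x\<^sub>0\<close> bounds its displacement by a
  conjugacy invariant of \<open>g\<close>.\<close>

section \<open>Walks and graph distance\<close>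

lemma is_walk_Cons:
  "is_walk E (x # xs) \<longleftrightarrow> xs = [] \<or> E x (hd xs) \<and> is_walk E xs"
proof (cases xs)
  case (Cons y ys)
  have "(\<forall>i. Suc i < length (x # y # ys) \<longrightarrow> E ((x # y # ys) ! i) ((x # y # ys) ! Suc i)) \<longleftrightarrow>
        E x y \<and> (\<forall>i. Suc i < length (y # ys) \<longrightarrow> E ((y # ys) ! i) ((y # ys) ! Suc i))"
    by (auto simp: less_Suc_eq_0_disj)
  then show ?thesis using Cons by (simp add: is_walk_def)
qed (simp add: is_walk_def)

lemma is_walk_single [simp]: "is_walk E [x]"
  by (simp add: is_walk_def)

lemma is_walk_Cons_Cons [simp]: "is_walk E (x # y # xs) \<longleftrightarrow> E x y \<and> is_walk E (y # xs)"
  by (simp add: is_walk_Cons)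

lemma is_walk_append:
  assumes "is_walk E xs" "is_walk E ys" "E (last xs) (hd ys)"
  shows "is_walk E (xs @ ys)"
  using assms
proof (induction xs)
  case (Cons x xs)
  then show ?case by (cases xs) (auto simp: is_walk_Cons)
qed (simp add: is_walk_def)

lemma is_walk_join:
  assumes "is_walk E xs" "is_walk E ys" "last xs = hd ys"
  shows "is_walk E (xs @ tl ys)"
proof (cases "tl ys")
  case (Cons z zs)
  have "ys = hd ys # z # zs"
    using assms(2) Cons by (metis is_walk_def list.collapse)
  then have "E (hd ys) z" "is_walk E (z # zs)"
    using assms(2) by (metis is_walk_Cons_Cons)+
  then show ?thesis using assms Cons by (intro is_walk_append) auto
qed (use assms in simp)

lemma is_walk_rev:
  assumes "sym_graph E" "is_walk E xs"
  shows "is_walk E (rev xs)"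
  using assms(2)
proof (induction xs)
  case (Cons x xs)
  show ?case
  proof (cases xs)
    case xs: (Cons z zs)
    then have "is_walk E (rev xs)" "E (last (rev xs)) x"
      using Cons.prems Cons.IH assms(1) by (auto simp: sym_graph_def last_rev)
    then show ?thesis by (simp add: is_walk_append)
  qed simp
qed (simp add: is_walk_def)

lemma is_walk_take: "is_walk E xs \<Longrightarrow> 0 < n \<Longrightarrow> is_walk E (take n xs)"
  unfolding is_walk_def by auto

lemma is_walk_drop: "is_walk E xs \<Longrightarrow> n < length xs \<Longrightarrow> is_walk E (drop n xs)"
  unfolding is_walk_def by auto

lemma is_walk_map:
  "is_walk E xs \<Longrightarrow> (\<And>u v. E u v \<Longrightarrow> E' (f u) (f v)) \<Longrightarrow> is_walk E' (map f xs)"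
  unfolding is_walk_def by auto

lemma is_walk_map_upt:
  assumes "lo \<le> hi" "\<And>i. lo \<le> i \<Longrightarrow> i < hi \<Longrightarrow> E (f i) (f (Suc i))"
  shows "is_walk E (map f [lo..<Suc hi])"
  using assms
proof (induction hi)
  case (Suc hi)
  show ?case
  proof (cases "lo = Suc hi")
    case False
    then have "lo \<le> hi" using Suc.prems by simp
    then have "is_walk E (map f [lo..<Suc hi])" "E (last (map f [lo..<Suc hi])) (f (Suc hi))"
      using Suc by (simp_all add: last_map)
    moreover have "map f [lo..<Suc (Suc hi)] = map f [lo..<Suc hi] @ [f (Suc hi)]"
      using \<open>lo \<le> hi\<close> by simp
    ultimately show ?thesis by (metis is_walk_append is_walk_single list.sel(1))
  qed simp
qed simp

locale connected_graph =
  fixes E :: "'v \<Rightarrow> 'v \<Rightarrow> bool"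
  assumes sym: "sym_graph E" and connected: "gconnected E"
begin

abbreviation d where "d \<equiv> gdist E"

lemma edge_sym: "E x y \<Longrightarrow> E y x"
  using sym unfolding sym_graph_def by blast

lemma d_le_walk:
  assumes "is_walk E xs" "hd xs = x" "last xs = y"
  shows "d x y \<le> length xs - 1"
  unfolding gdist_def
  by (rule Least_le, rule exI[of _ xs]) (use assms in \<open>auto simp: is_walk_def\<close>)

lemma shortest_walk:
  "\<exists>xs. is_walk E xs \<and> hd xs = x \<and> last xs = y \<and> length xs = Suc (d x y)"
proof -
  obtain xs where "is_walk E xs" "hd xs = x" "last xs = y"
    using connected unfolding gconnected_def by blast
  then have "\<exists>n xs. is_walk E xs \<and> hd xs = x \<and> last xs = y \<and> length xs = Suc n"
    by (intro exI[of _ "length xs - 1"] exI[of _ xs]) (auto simp: is_walk_def)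
  then show ?thesis unfolding gdist_def by (rule LeastI_ex)
qed

lemma d_refl [simp]: "d x x = 0"
  using d_le_walk[of "[x]" x x] by simp

lemma d_eq_0_iff [simp]: "d x y = 0 \<longleftrightarrow> x = y"
proof
  assume "d x y = 0"
  obtain xs where xs: "is_walk E xs" "hd xs = x" "last xs = y" "length xs = Suc (d x y)"
    using shortest_walk by blast
  then obtain a where "xs = [a]" using \<open>d x y = 0\<close> by (metis length_0_conv length_Suc_conv)
  then show "x = y" using xs by simp
qed simp

lemma d_edge: "E x y \<Longrightarrow> d x y \<le> 1"
  using d_le_walk[of "[x, y]" x y] by simp

lemma d_triangle: "d x z \<le> d x y + d y z"
proof -
  obtain xs where xs: "is_walk E xs" "hd xs = x" "last xs = y" "length xs = Suc (d x y)"
    using shortest_walk by blast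
  obtain ys where ys: "is_walk E ys" "hd ys = y" "last ys = z" "length ys = Suc (d y z)"
    using shortest_walk by blast
  have "is_walk E (xs @ tl ys)" using xs ys by (intro is_walk_join) auto
  moreover have "hd (xs @ tl ys) = x" using xs by (cases xs) auto
  moreover have "last (xs @ tl ys) = z"
  proof (cases "tl ys = []")
    case True
    have "ys \<noteq> []" using ys(1) unfolding is_walk_def by simp
    then have "ys = [y]" using True ys(2) by (metis list.collapse)
    then show ?thesis using True xs ys by simp
  next
    case False
    then show ?thesis using ys by (simp add: last_tl)
  qed
  ultimately have "d x z \<le> length (xs @ tl ys) - 1" using d_le_walk by blast
  then show ?thesis using xs ys by simp
qed

lemma d_sym: "d x y = d y x"
proof -
  have "d y x \<le> d x y" for x y
  proof -
    obtain xs where xs: "is_walk E xs" "hd xs = x" "last xs = y" "length xs = Suc (d x y)"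
      using shortest_walk by blast
    then show ?thesis
      using d_le_walk[of "rev xs" y x] is_walk_rev[OF sym xs(1)] by (simp add: hd_rev last_rev)
  qed
  then show ?thesis by (simp add: le_antisym)
qed

lemma d_hom_le:
  assumes "\<And>u v. E u v \<Longrightarrow> E (f u) (f v)"
  shows "d (f x) (f y) \<le> d x y"
proof -
  obtain xs where xs: "is_walk E xs" "hd xs = x" "last xs = y" "length xs = Suc (d x y)"
    using shortest_walk by blast
  then have "hd (map f xs) = f x" "last (map f xs) = f y"
    by (auto simp: hd_map last_map is_walk_def)
  moreover have "is_walk E (map f xs)" using is_walk_map[OF xs(1)] assms by blast
  ultimately show ?thesis using d_le_walk[of "map f xs"] xs by fastforce
qed

lemma geodesic_walk:
  "\<exists>xs. is_walk E xs \<and> hd xs = x \<and> last xs = y \<and> length xs = Suc (d x y) \<and>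
     (\<forall>i \<le> d x y. d x (xs ! i) = i \<and> d (xs ! i) y = d x y - i)"
proof -
  obtain xs where xs: "is_walk E xs" "hd xs = x" "last xs = y" "length xs = Suc (d x y)"
    using shortest_walk by blast
  have "d x (xs ! i) = i \<and> d (xs ! i) y = d x y - i" if i: "i \<le> d x y" for i
  proof -
    have "is_walk E (take (Suc i) xs)" using is_walk_take xs(1) by auto
    moreover have "hd (take (Suc i) xs) = x" using xs by (cases xs) auto
    moreover have "last (take (Suc i) xs) = xs ! i" using xs i
      by (subst last_conv_nth) (auto simp: min_def)
    moreover have "length (take (Suc i) xs) = Suc i" using xs i by simp
    ultimately have "d x (xs ! i) \<le> i" using d_le_walk[of "take (Suc i) xs" x "xs ! i"] by simp
    moreover have "d (xs ! i) y \<le> d x y - i"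
      using d_le_walk[of "drop i xs"] is_walk_drop[OF xs(1), of i] xs i
      by (simp add: hd_drop_conv_nth)
    ultimately show ?thesis using d_triangle[of x y "xs ! i"] i by linarith
  qed
  then show ?thesis using xs by blast
qed

lemma exists_pred:
  assumes "x \<noteq> w"
  shows "\<exists>y. E y x \<and> Suc (d w y) = d w x"
proof -
  obtain xs where xs: "is_walk E xs" "hd xs = w" "last xs = x" "length xs = Suc (d w x)"
    "\<forall>i \<le> d w x. d w (xs ! i) = i \<and> d (xs ! i) x = d w x - i"
    using geodesic_walk by blast
  obtain n where n: "d w x = Suc n" using assms by (metis d_eq_0_iff not0_implies_Suc)
  have "xs \<noteq> []" using xs(4) by auto
  then have "xs ! Suc n = x" using xs(3,4) n by (simp add: last_conv_nth)
  moreover have "E (xs ! n) (xs ! Suc n)" using xs(1,4) n unfolding is_walk_def by simp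
  ultimately show ?thesis using xs(5) n by (intro exI[of _ "xs ! n"]) auto
qed

end

locale tree_graph = connected_graph +
  assumes loop_free: "\<not> E x x"
    and acyclic: "\<not> (\<exists>xs. is_walk E xs \<and> distinct xs \<and> 3 \<le> length xs \<and> E (last xs) (hd xs))"

lemma simplicial_tree_iff_tree_graph: "simplicial_tree E \<longleftrightarrow> tree_graph E"
  unfolding simplicial_tree_def tree_graph_def tree_graph_axioms_def connected_graph_def by blast

section \<open>Rooted trees\<close>

locale rooted_tree = tree_graph +
  fixes root :: 'a
begin

definition height where "height u = d root u"

definition parent where "parent u = (SOME y. E y u \<and> Suc (height y) = height u)"

lemma parent: assumes "u \<noteq> root" shows "E (parent u) u" "Suc (height (parent u)) = height u"
proof -
  have "\<exists>y. E y u \<and> Suc (height y) = height u" using exists_pred[OF assms] unfolding height_def .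
  then have "E (parent u) u \<and> Suc (height (parent u)) = height u" unfolding parent_def
    by (rule someI_ex)
  then show "E (parent u) u" "Suc (height (parent u)) = height u" by auto
qed

lemma height_eq_0_iff: "height u = 0 \<longleftrightarrow> u = root"
  unfolding height_def by (metis d_eq_0_iff)

lemma height_root [simp]: "height root = 0"
  by (simp add: height_eq_0_iff)

lemma parent_neq: "u \<noteq> root \<Longrightarrow> parent u \<noteq> u"
  using parent(2) by fastforce

lemma edge_parent: "u \<noteq> root \<Longrightarrow> E u (parent u)"
  using parent(1) edge_sym by blast

lemma height_edge: "E u v \<Longrightarrow> height u \<le> Suc (height v)"
  using d_triangle[of root u v] d_edge[of v u] edge_sym unfolding height_def by fastforce

definition ancestor where "ancestor u i = (parent ^^ (height u - i)) u"

lemma height_funpow_parent: "k \<le> height u \<Longrightarrow> height ((parent ^^ k) u) = height u - k"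
proof (induction k)
  case (Suc k)
  then have h: "height ((parent ^^ k) u) = height u - k" by simp
  then have "(parent ^^ k) u \<noteq> root" using Suc.prems height_eq_0_iff by fastforce
  then have "Suc (height (parent ((parent ^^ k) u))) = height ((parent ^^ k) u)" using parent
    by blast
  then show ?case using h by simp
qed simp

lemma height_ancestor [simp]: "i \<le> height u \<Longrightarrow> height (ancestor u i) = i"
  unfolding ancestor_def using height_funpow_parent[of "height u - i" u] by simp

lemma ancestor_height [simp]: "ancestor u (height u) = u"
  unfolding ancestor_def by simp

lemma ancestor_0 [simp]: "ancestor u 0 = root"
proof -
  have "height (ancestor u 0) = 0" by simp
  then show ?thesis using height_eq_0_iff by blast
qed

lemma ancestor_ancestor:
  assumes "j \<le> i" "i \<le> height u"
  shows "ancestor (ancestor u i) j = ancestor u j"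
proof -
  have "ancestor (ancestor u i) j = (parent ^^ (i - j)) (ancestor u i)"
    unfolding ancestor_def[of "ancestor u i" j] using height_ancestor[OF assms(2)] by simp
  also have "\<dots> = (parent ^^ (i - j)) ((parent ^^ (height u - i)) u)" unfolding ancestor_def ..
  also have "\<dots> = (parent ^^ ((i - j) + (height u - i))) u" by (simp add: funpow_add)
  also have "(i - j) + (height u - i) = height u - j" using assms by simp
  finally show ?thesis unfolding ancestor_def by simp
qed

lemma parent_ancestor_Suc:
  assumes "i < height u"
  shows "parent (ancestor u (Suc i)) = ancestor u i"
proof -
  have "Suc (height u - Suc i) = height u - i" using assms by simp
  then show ?thesis unfolding ancestor_def by (metis funpow.simps(2) o_apply)
qed

lemma ancestor_edge:
  assumes "i < height u"
  shows "E (ancestor u i) (ancestor u (Suc i))"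
proof -
  have "ancestor u (Suc i) \<noteq> root" using assms height_ancestor[of "Suc i" u] by fastforce
  then show ?thesis using parent(1) parent_ancestor_Suc[OF assms] by metis
qed

lemma ancestor_parent:
  assumes "u \<noteq> root"
  shows "ancestor u (height (parent u)) = parent u"
  using parent_ancestor_Suc[of "height (parent u)" u] parent(2)[OF assms] by simp

lemma inj_on_ancestor: "inj_on (ancestor u) {..height u}"
  by (rule inj_on_inverseI[of _ height]) simp

definition meet_height where
  "meet_height u v = (GREATEST i. i \<le> height u \<and> i \<le> height v \<and> ancestor u i = ancestor v i)"

lemma meet_height:
  "meet_height u v \<le> height u" "meet_height u v \<le> height v"
  "ancestor u (meet_height u v) = ancestor v (meet_height u v)"
proof -
  have "(\<lambda>i. i \<le> height u \<and> i \<le> height v \<and> ancestor u i = ancestor v i) (meet_height u v)"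
    unfolding meet_height_def
    by (rule GreatestI_nat[of _ 0 "height u"]) auto
  then show "meet_height u v \<le> height u" "meet_height u v \<le> height v"
    "ancestor u (meet_height u v) = ancestor v (meet_height u v)" by auto
qed

lemma meet_height_greatest:
  "i \<le> height u \<Longrightarrow> i \<le> height v \<Longrightarrow> ancestor u i = ancestor v i \<Longrightarrow> i \<le> meet_height u v"
  unfolding meet_height_def by (rule Greatest_le_nat[of _ i "height u"]) auto

lemma ancestor_eq_below:
  assumes "j \<le> i" "i \<le> height u" "i \<le> height v" "ancestor u i = ancestor v i"
  shows "ancestor u j = ancestor v j"
  using ancestor_ancestor[of j i u] ancestor_ancestor[of j i v] assms by simp

lemma common_ancestor_below_meet: "i \<le> meet_height u v \<Longrightarrow> ancestor u i = ancestor v i"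
  using ancestor_eq_below[of i "meet_height u v" u v] meet_height[of u v] by simp

lemma meet_height_sym: "meet_height u v = meet_height v u"
proof -
  have "meet_height u v \<le> meet_height v u" for u v
    using meet_height_greatest[of "meet_height u v" v u] meet_height[of u v] by simp
  then show ?thesis by (simp add: le_antisym)
qed

lemma meet_height_refl [simp]: "meet_height u u = height u"
  using meet_height(1)[of u u] meet_height_greatest[of "height u" u u] by simp

lemma meet_height_ultrametric: "min (meet_height u z) (meet_height z v) \<le> meet_height u v"
proof -
  define i where "i = min (meet_height u z) (meet_height z v)"
  have "ancestor u i = ancestor z i" "ancestor z i = ancestor v i"
    using common_ancestor_below_meet[of i u z] common_ancestor_below_meet[of i z v] i_def by auto
  then show ?thesis
    using meet_height_greatest[of i u v] meet_height[of u z] meet_height[of z v] i_def by simp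
qed

lemma meet_height_parent:
  assumes "u \<noteq> root"
  shows "meet_height u (parent u) = height (parent u)"
  using meet_height_greatest[of "height (parent u)" u "parent u"] meet_height(2)[of u "parent u"]
    parent(2)[OF assms] ancestor_parent[OF assms] by simp

lemma meet_height_parent_left:
  assumes "c \<noteq> root"
  shows "meet_height (parent c) x = min (meet_height c x) (height (parent c))"
proof -
  have anc: "ancestor (parent c) i = ancestor c i" if "i \<le> height (parent c)" for i
    using ancestor_ancestor[OF that, of c] ancestor_parent[OF assms] parent(2)[OF assms] by simp
  have "min (meet_height c x) (height (parent c)) \<le> meet_height (parent c) x"
    using meet_height[of c x] anc common_ancestor_below_meet
    by (intro meet_height_greatest) auto
  moreover have "meet_height (parent c) x \<le> meet_height c x"
    using meet_height[of "parent c" x] anc parent(2)[OF assms] by (intro meet_height_greatest) auto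
  ultimately show ?thesis using meet_height(1)[of "parent c" x] by simp
qed

lemma path_through_meet:
  assumes ab: "a \<noteq> b" "height a = height b"
  obtains W where "is_walk E W" "distinct W" "hd W = a" "last W = b" "3 \<le> length W"
    "\<forall>x\<in>set W. height x \<le> height a"
proof -
  define L where "L = meet_height a b"
  define h where "h = height a"
  have Lh: "L < h"
    using meet_height[of a b] ab ancestor_height unfolding L_def h_def
      by (metis le_neq_implies_less)
  define W1 where "W1 = rev (map (ancestor a) [L..<Suc h])"
  define W2 where "W2 = map (ancestor b) [Suc L..<Suc h]"
  have "is_walk E W1" unfolding W1_def
    by (intro is_walk_rev[OF sym] is_walk_map_upt) (use Lh h_def ancestor_edge in auto)
  moreover have "is_walk E W2" unfolding W2_def
    by (intro is_walk_map_upt) (use Lh h_def ab ancestor_edge in auto)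
  moreover have "E (last W1) (hd W2)"
    using ancestor_edge[of L b] meet_height(3)[of a b] Lh ab
    unfolding W1_def W2_def L_def h_def by (simp add: last_rev upt_conv_Cons del: upt_Suc)
  ultimately have "is_walk E (W1 @ W2)" by (rule is_walk_append)
  moreover have "inj_on (ancestor a) {L..<Suc h}" "inj_on (ancestor b) {Suc L..<Suc h}"
    by (rule inj_on_subset[OF inj_on_ancestor]; use ab h_def in auto)+
  then have "distinct W1" "distinct W2"
    unfolding W1_def W2_def by (simp_all add: distinct_map del: upt_Suc)
  moreover have "set W1 \<inter> set W2 = {}"
  proof (rule ccontr)
    assume "set W1 \<inter> set W2 \<noteq> {}"
    moreover have "set W1 = ancestor a ` {L..h}" "set W2 = ancestor b ` {Suc L..h}"
      unfolding W1_def W2_def by auto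
    ultimately obtain i j where ij: "i \<in> {L..h}" "j \<in> {Suc L..h}" "ancestor a i = ancestor b j"
      by (metis (no_types, lifting) disjoint_iff imageE)
    have "i = j" using ij height_ancestor[of i a] height_ancestor[of j b] ab h_def by auto
    then have "i \<le> L" using meet_height_greatest[of i a b] ij ab h_def L_def by auto
    then show False using ij \<open>i = j\<close> by auto
  qed
  moreover have "hd (W1 @ W2) = a" unfolding W1_def using Lh h_def by (simp add: hd_rev last_map)
  moreover have "last (W1 @ W2) = b" unfolding W2_def using Lh ab h_def by (simp add: last_map)
  moreover have "3 \<le> length (W1 @ W2)" unfolding W1_def W2_def using Lh by simp
  moreover have "\<forall>x\<in>set (W1 @ W2). height x \<le> h"
    unfolding W1_def W2_def using ab h_def by auto
  ultimately show ?thesis using that h_def by simp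
qed

lemma same_height_not_edge:
  assumes "a \<noteq> b" "height a = height b"
  shows "\<not> E a b"
proof
  assume "E a b"
  obtain W where "is_walk E W" "distinct W" "hd W = a" "last W = b" "3 \<le> length W"
    using path_through_meet[OF assms] .
  then show False using acyclic edge_sym[OF \<open>E a b\<close>] by auto
qed

lemma lower_neighbour_unique:
  assumes "E y a" "E y b" "Suc (height a) = height y" "Suc (height b) = height y"
  shows "a = b"
proof (rule ccontr)
  assume "a \<noteq> b"
  moreover have "height a = height b" using assms(3,4) by simp
  ultimately obtain W where W: "is_walk E W" "distinct W" "hd W = a" "last W = b" "3 \<le> length W"
    "\<forall>x\<in>set W. height x \<le> height a"
    using path_through_meet by blast
  have "is_walk E (W @ [y])" using W assms edge_sym by (intro is_walk_append) auto
  moreover have "distinct (W @ [y])" using W assms by fastforce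
  moreover have "3 \<le> length (W @ [y])" using W by simp
  moreover have "E (last (W @ [y])) (hd (W @ [y]))"
    using W assms by (cases W) auto
  ultimately show False using acyclic by blast
qed

lemma edge_cases:
  assumes "E u v"
  shows "(u \<noteq> root \<and> v = parent u) \<or> (v \<noteq> root \<and> u = parent v)"
proof -
  have "u \<noteq> v" using loop_free assms by blast
  have uv: "height u \<le> Suc (height v)" "height v \<le> Suc (height u)"
    using height_edge assms edge_sym by blast+
  consider "height u = height v" | "height u = Suc (height v)" | "height v = Suc (height u)"
    using uv by linarith
  then show ?thesis
  proof cases
    case 1
    then show ?thesis using same_height_not_edge \<open>u \<noteq> v\<close> assms by blast
  next
    case 2
    then have "u \<noteq> root" using height_eq_0_iff by fastforce
    then show ?thesis
      using lower_neighbour_unique[of u v "parent u"] parent[of u] assms edge_sym 2 by auto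
  next
    case 3
    then have "v \<noteq> root" using height_eq_0_iff by fastforce
    then show ?thesis
      using lower_neighbour_unique[of v u "parent v"] parent[of v] assms edge_sym 3 by auto
  qed
qed

lemma d_funpow_parent_le: "k \<le> height u \<Longrightarrow> d u ((parent ^^ k) u) \<le> k"
proof (induction k)
  case (Suc k)
  have "height ((parent ^^ k) u) = height u - k" using Suc.prems height_funpow_parent by simp
  then have "(parent ^^ k) u \<noteq> root" using Suc.prems height_eq_0_iff by fastforce
  then have "d ((parent ^^ k) u) (parent ((parent ^^ k) u)) \<le> 1"
    using edge_parent d_edge by blast
  moreover have "d u ((parent ^^ Suc k) u)
      \<le> d u ((parent ^^ k) u) + d ((parent ^^ k) u) (parent ((parent ^^ k) u))"
    using d_triangle by simp
  ultimately show ?case using Suc by simp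
qed simp

lemma d_ancestor_le: "i \<le> height u \<Longrightarrow> d u (ancestor u i) \<le> height u - i"
  unfolding ancestor_def by (rule d_funpow_parent_le) simp

lemma meet_formula_triangle:
  "height u + height v - 2 * meet_height u v \<le>
     (height u + height z - 2 * meet_height u z) + (height z + height v - 2 * meet_height z v)"
  using meet_height_ultrametric[of u z v] meet_height[of u z] meet_height[of z v]
    meet_height[of u v]
  by (cases "meet_height u z \<le> meet_height z v") (simp_all add: min_def)

lemma meet_formula_edge:
  assumes "E u v"
  shows "height u + height v - 2 * meet_height u v \<le> 1"
  using edge_cases[OF assms]
proof
  assume "u \<noteq> root \<and> v = parent u"
  then show ?thesis using meet_height_parent[of u] parent(2)[of u] by auto
next
  assume "v \<noteq> root \<and> u = parent v"
  then show ?thesis using meet_height_parent[of v] parent(2)[of v] meet_height_sym[of u v] by auto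
qed

lemma meet_formula_walk:
  "is_walk E xs \<Longrightarrow>
    height (hd xs) + height (last xs) - 2 * meet_height (hd xs) (last xs) \<le> length xs - 1"
proof (induction xs)
  case (Cons x xs)
  show ?case
  proof (cases xs)
    case xs: (Cons y ys)
    then have "E x y" "is_walk E xs" using Cons.prems by auto
    then have "height y + height (last xs) - 2 * meet_height y (last xs) \<le> length xs - 1"
      using Cons.IH xs by simp
    moreover have "height x + height y - 2 * meet_height x y \<le> 1"
      using meet_formula_edge \<open>E x y\<close> by blast
    ultimately show ?thesis using meet_formula_triangle[of x "last xs" y] xs by simp
  qed simp
qed (simp add: is_walk_def)

lemma d_eq_meet_formula: "d u v = height u + height v - 2 * meet_height u v"
proof (rule antisym)
  define m where "m = ancestor u (meet_height u v)"
  have "d u m \<le> height u - meet_height u v"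
    using d_ancestor_le meet_height(1)[of u v] unfolding m_def by blast
  moreover have "d v m \<le> height v - meet_height u v"
    using d_ancestor_le meet_height(2,3)[of u v] unfolding m_def by metis
  moreover have "d u v \<le> d u m + d m v" by (rule d_triangle)
  ultimately show "d u v \<le> height u + height v - 2 * meet_height u v"
    using d_sym[of m v] meet_height[of u v] by linarith
  obtain xs where "is_walk E xs" "hd xs = u" "last xs = v" "length xs = Suc (d u v)"
    using shortest_walk by blast
  then show "height u + height v - 2 * meet_height u v \<le> d u v"
    using meet_formula_walk[of xs] by simp
qed

end

section \<open>Zero-hyperbolic spaces\<close>

lemma real_point_at_distance:
  fixes s s0 \<theta> :: real
  assumes "0 \<le> \<theta>" "\<theta> \<le> \<bar>s - s0\<bar>"
  shows "\<exists>s'. \<bar>s' - s0\<bar> = \<theta> \<and> \<bar>s - s'\<bar> = \<bar>s - s0\<bar> - \<theta>"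
proof (cases "s0 \<le> s")
  case True
  then show ?thesis using assms by (intro exI[of _ "s0 + \<theta>"]) auto
next
  case False
  then show ?thesis using assms by (intro exI[of _ "s0 - \<theta>"]) auto
qed

lemma real_isometry_affine:
  fixes \<theta> :: "real \<Rightarrow> real"
  assumes iso: "\<And>s t. s \<in> A \<Longrightarrow> t \<in> A \<Longrightarrow> \<bar>\<theta> s - \<theta> t\<bar> = \<bar>s - t\<bar>"
    and s0: "s0 \<in> A" and s1: "s1 \<in> A" "s1 \<noteq> s0"
  shows "\<exists>e. (e = 1 \<or> e = -1) \<and> (\<forall>s\<in>A. \<theta> s = \<theta> s0 + e * (s - s0))"
proof -
  define e where "e = (\<theta> s1 - \<theta> s0) / (s1 - s0)"
  have "\<bar>\<theta> s1 - \<theta> s0\<bar> = \<bar>s1 - s0\<bar>" using iso s0 s1 by simp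
  then have e1: "e = 1 \<or> e = -1" unfolding e_def using s1
    by (auto simp: abs_if divide_simps split: if_splits)
  have eq1: "\<theta> s1 = \<theta> s0 + e * (s1 - s0)" unfolding e_def using s1 by (simp add: divide_simps)
  have "\<theta> s = \<theta> s0 + e * (s - s0)" if s: "s \<in> A" for s
  proof -
    have a: "\<bar>\<theta> s - \<theta> s0\<bar> = \<bar>s - s0\<bar>" using iso s s0 by simp
    have b: "\<bar>\<theta> s - \<theta> s1\<bar> = \<bar>s - s1\<bar>" using iso s s1 by simp
    show ?thesis using a b eq1 e1 s1(2) by (auto simp: abs_if split: if_splits)
  qed
  then show ?thesis using e1 by blast
qed

text \<open>This is the four-point condition for a distance \<open>h x + h y - 2 m x y\<close> whose Gromov product
  \<open>m\<close> is ultrametric.\<close>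

lemma four_point_of_ultrametric:
  fixes m :: "'x \<Rightarrow> 'x \<Rightarrow> real"
  assumes sym: "\<And>x y. m x y = m y x" and ultra: "\<And>x y z. min (m x y) (m y z) \<le> m x z"
  shows "min (m a c + m b d) (m a d + m b c) \<le> m a b + m c d"
proof -
  have "min (m a c) (m c b) \<le> m a b" "min (m a d) (m d b) \<le> m a b"
    "min (m c a) (m a d) \<le> m c d" "min (m c b) (m b d) \<le> m c d"
    "min (m a b) (m b c) \<le> m a c" "min (m a d) (m d c) \<le> m a c"
    "min (m a b) (m b d) \<le> m a d" "min (m a c) (m c d) \<le> m a d"
    "min (m b a) (m a d) \<le> m b d" "min (m b c) (m c d) \<le> m b d"
    "min (m b a) (m a c) \<le> m b c" "min (m b d) (m d c) \<le> m b c"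
    by (rule ultra)+
  then show ?thesis using sym unfolding min_def by (smt (verit))
qed

locale zero_hyperbolic =
  fixes S :: "'p set" and D :: "'p \<Rightarrow> 'p \<Rightarrow> real"
  assumes D_sym: "P \<in> S \<Longrightarrow> Q \<in> S \<Longrightarrow> D P Q = D Q P"
    and D_self: "P \<in> S \<Longrightarrow> D P P = 0"
    and D_eq_0: "P \<in> S \<Longrightarrow> Q \<in> S \<Longrightarrow> D P Q = 0 \<Longrightarrow> P = Q"
    and D_triangle: "P \<in> S \<Longrightarrow> Q \<in> S \<Longrightarrow> Z \<in> S \<Longrightarrow> D P Q \<le> D P Z + D Z Q"
    and four_point: "P1 \<in> S \<Longrightarrow> P2 \<in> S \<Longrightarrow> P3 \<in> S \<Longrightarrow> P4 \<in> S \<Longrightarrow>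
      D P1 P2 + D P3 P4 \<le> max (D P1 P3 + D P2 P4) (D P1 P4 + D P2 P3)"
begin

lemma D_nonneg: "P \<in> S \<Longrightarrow> Q \<in> S \<Longrightarrow> 0 \<le> D P Q"
  using D_triangle[of P P Q] D_self[of P] D_sym[of P Q] by simp

definition between where "between P X Q \<longleftrightarrow> D P X + D X Q = D P Q"

definition geodesic_line where
  "geodesic_line \<gamma> \<longleftrightarrow> (\<forall>s. \<gamma> s \<in> S) \<and> (\<forall>s t. D (\<gamma> s) (\<gamma> t) = \<bar>s - t\<bar>)"

lemma geodesic_lineD: "geodesic_line \<gamma> \<Longrightarrow> \<gamma> s \<in> S" "geodesic_line \<gamma> \<Longrightarrow> D (\<gamma> s) (\<gamma> t) = \<bar>s - t\<bar>"
  unfolding geodesic_line_def by auto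

lemma between_unique:
  assumes "P \<in> S" "Q \<in> S" "X \<in> S" "Y \<in> S" "between P X Q" "between P Y Q" "D P X = D P Y"
  shows "X = Y"
proof -
  have "D P Q + D X Y \<le> max (D P X + D Q Y) (D P Y + D Q X)" using four_point assms(1-4) by blast
  moreover have "D Q Y = D Y Q" "D Q X = D X Q" using D_sym assms by auto
  ultimately have "D X Y \<le> 0" using assms(5-7) unfolding between_def
    by (simp add: max_def split: if_splits)
  then have "D X Y = 0" using D_nonneg assms by (simp add: order_antisym)
  then show ?thesis using D_eq_0 assms by blast
qed

lemma between_sym: "P \<in> S \<Longrightarrow> Q \<in> S \<Longrightarrow> X \<in> S \<Longrightarrow> between P X Q \<Longrightarrow> between Q X P"
  unfolding between_def using D_sym by simp

lemma between_shift:
  assumes R: "a \<in> S" "a' \<in> S" "u \<in> S" "b \<in> S" and B: "between a u b" and lt: "D a a' < D a u"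
  shows "between a' u b"
proof -
  have "D a b + D u a' \<le> max (D a u + D b a') (D a a' + D b u)" using four_point R by blast
  moreover have "D a b = D a u + D u b" using B unfolding between_def by simp
  moreover have "D a u \<le> D a a' + D a' u" using D_triangle R by blast
  moreover have "D u a' = D a' u" "D b a' = D a' b" "D b u = D u b" using D_sym R by auto
  moreover have "D a' b \<le> D a' u + D u b" using D_triangle R by blast
  moreover have "0 \<le> D a' u" using D_nonneg R by blast
  ultimately show ?thesis unfolding between_def using lt by (auto simp: max_def split: if_splits)
qed

lemma isCont_dist_line: assumes "geodesic_line \<gamma>" "P \<in> S" shows "isCont (\<lambda>s. D P (\<gamma> s)) x"
proof -
  have L: "\<bar>D P (\<gamma> s) - D P (\<gamma> t)\<bar> \<le> \<bar>s - t\<bar>" for s t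
  proof -
    have "D P (\<gamma> s) \<le> D P (\<gamma> t) + D (\<gamma> t) (\<gamma> s)" using D_triangle assms geodesic_lineD by blast
    moreover have "D P (\<gamma> t) \<le> D P (\<gamma> s) + D (\<gamma> s) (\<gamma> t)" using D_triangle assms geodesic_lineD
      by blast
    ultimately show ?thesis using geodesic_lineD[OF assms(1)] by (simp add: abs_minus_commute)
  qed
  show ?thesis unfolding isCont_def LIM_eq
  proof (intro allI impI)
    fix r :: real assume "0 < r"
    then show "\<exists>s>0. \<forall>y. y \<noteq> x \<and> norm (y - x) < s \<longrightarrow> norm (D P (\<gamma> y) - D P (\<gamma> x)) < r"
      using L by (intro exI[of _ r]) (auto intro: le_less_trans)
  qed
qed

lemma dist_line_attains_min:
  assumes L: "geodesic_line \<gamma>" and P: "P \<in> S"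
  shows "\<exists>s0. \<forall>s. D P (\<gamma> s0) \<le> D P (\<gamma> s)"
proof -
  define f where "f s = D P (\<gamma> s)" for s
  define R where "R = 2 * f 0 + 1"
  have f0: "0 \<le> f 0" unfolding f_def using D_nonneg P geodesic_lineD[OF L] by blast
  have "\<exists>M. (\<forall>x. -R \<le> x \<and> x \<le> R \<longrightarrow> M \<le> f x) \<and> (\<exists>x. -R \<le> x \<and> x \<le> R \<and> f x = M)"
    by (rule isCont_eq_Lb) (use f0 R_def isCont_dist_line[OF L P] f_def in auto)
  then obtain s0 where s0: "-R \<le> s0" "s0 \<le> R" "\<forall>x. -R \<le> x \<and> x \<le> R \<longrightarrow> f s0 \<le> f x" by blast
  have "f s0 \<le> f s" for s
  proof (cases "-R \<le> s \<and> s \<le> R")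
    case True then show ?thesis using s0 by blast
  next
    case False
    have "D (\<gamma> 0) (\<gamma> s) \<le> D (\<gamma> 0) P + D P (\<gamma> s)" using D_triangle P geodesic_lineD[OF L] by blast
    moreover have "D (\<gamma> 0) P = f 0" unfolding f_def using D_sym P geodesic_lineD[OF L] by metis
    ultimately have "\<bar>s\<bar> \<le> f 0 + f s" using geodesic_lineD(2)[OF L, of 0 s] f_def by simp
    then have "f s > f 0" using False R_def by auto
    moreover have "f s0 \<le> f 0" using s0 f0 R_def by auto
    ultimately show ?thesis by simp
  qed
  then show ?thesis unfolding f_def by blast
qed

lemma line_projection:
  assumes L: "geodesic_line \<gamma>" and P: "P \<in> S"
  shows "\<exists>s0. \<forall>s. D P (\<gamma> s) = D P (\<gamma> s0) + \<bar>s - s0\<bar>"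
proof -
  define f where "f s = D P (\<gamma> s)" for s
  obtain s0 where glob: "\<And>s. f s0 \<le> f s"
    using dist_line_attains_min[OF L P] unfolding f_def by blast
  define r where "r = f s0"
  have "f s = r + \<bar>s - s0\<bar>" for s
  proof (rule ccontr)
    assume ne: "f s \<noteq> r + \<bar>s - s0\<bar>"
    have le: "f s \<le> r + \<bar>s - s0\<bar>"
    proof -
      have "D P (\<gamma> s) \<le> D P (\<gamma> s0) + D (\<gamma> s0) (\<gamma> s)" using D_triangle P geodesic_lineD[OF L]
        by blast
      then show ?thesis using geodesic_lineD(2)[OF L, of s0 s] unfolding f_def r_def
        by (simp add: abs_minus_commute)
    qed
    define Lg where "Lg = \<bar>s - s0\<bar>"
    define \<delta> where "\<delta> = (r + Lg - f s) / 2"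
    have dpos: "\<delta> > 0" using le ne unfolding \<delta>_def Lg_def by simp
    have "s \<noteq> s0" using ne r_def by auto
    then have Lpos: "Lg > 0" unfolding Lg_def by simp
    define \<theta> where "\<theta> = min \<delta> Lg / 2"
    have th: "0 < \<theta>" "\<theta> < \<delta>" "\<theta> < Lg" using dpos Lpos unfolding \<theta>_def by (auto simp: min_def)
    obtain s' where d1: "\<bar>s' - s0\<bar> = \<theta>" and d2: "\<bar>s - s'\<bar> = Lg - \<theta>"
      using real_point_at_distance[of \<theta> s s0] th unfolding Lg_def by auto
    have "D P (\<gamma> s') + D (\<gamma> s0) (\<gamma> s)
        \<le> max (D P (\<gamma> s0) + D (\<gamma> s') (\<gamma> s)) (D P (\<gamma> s) + D (\<gamma> s') (\<gamma> s0))"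
      using four_point P geodesic_lineD(1)[OF L] by blast
    then have "f s' + Lg \<le> max (r + (Lg - \<theta>)) (f s + \<theta>)"
      using geodesic_lineD(2)[OF L] d1 d2 unfolding f_def r_def Lg_def
        by (simp add: abs_minus_commute)
    then have "f s' < r" using th unfolding \<delta>_def by (auto simp: max_def split: if_splits)
    then show False using glob[of s'] r_def by simp
  qed
  then show ?thesis unfolding f_def r_def by blast
qed

lemma fixed_point_free_line_isometry:
  assumes L: "geodesic_line \<gamma>"
    and T_iso: "\<And>P Q. P \<in> S \<Longrightarrow> Q \<in> S \<Longrightarrow> D (T P) (T Q) = D P Q"
    and T_line: "T ` range \<gamma> = range \<gamma>"
    and no_fix: "\<And>P. P \<in> S \<Longrightarrow> T P \<noteq> P"
  shows "\<exists>\<tau>. \<tau> \<noteq> 0 \<and> (\<forall>s. T (\<gamma> s) = \<gamma> (s + \<tau>))"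
proof -
  have "\<forall>s. \<exists>t. T (\<gamma> s) = \<gamma> t" using T_line by blast
  then obtain \<sigma> where \<sigma>: "\<And>s. T (\<gamma> s) = \<gamma> (\<sigma> s)" by metis
  have "\<bar>\<sigma> s - \<sigma> t\<bar> = \<bar>s - t\<bar>" for s t
    using T_iso[of "\<gamma> s" "\<gamma> t"] geodesic_lineD[OF L] unfolding \<sigma> by simp
  then obtain e where e: "e = 1 \<or> e = -1" "\<And>s. \<sigma> s = \<sigma> 0 + e * s"
    using real_isometry_affine[of UNIV \<sigma> 0 1] by auto
  have "e = 1"
  proof (rule ccontr)
    assume "e \<noteq> 1"
    then have "e = -1" using e(1) by simp
    then have "T (\<gamma> (\<sigma> 0 / 2)) = \<gamma> (\<sigma> 0 / 2)" using \<sigma>[of "\<sigma> 0 / 2"] e(2)[of "\<sigma> 0 / 2"] by simp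
    then show False using no_fix geodesic_lineD(1)[OF L] by blast
  qed
  then have T: "T (\<gamma> s) = \<gamma> (s + \<sigma> 0)" for s using \<sigma>[of s] e(2)[of s] by (simp add: add.commute)
  moreover have "\<sigma> 0 \<noteq> 0" using T[of 0] no_fix geodesic_lineD(1)[OF L] by force
  ultimately show ?thesis by blast
qed

lemma translation_displacement:
  assumes L: "geodesic_line \<gamma>"
    and T_in: "\<And>P. P \<in> S \<Longrightarrow> T P \<in> S"
    and T_iso: "\<And>P Q. P \<in> S \<Longrightarrow> Q \<in> S \<Longrightarrow> D (T P) (T Q) = D P Q"
    and T_shift: "\<And>s. T (\<gamma> s) = \<gamma> (s + \<tau>)" and tau: "\<tau> \<noteq> 0"
    and P: "P \<in> S"
  shows "\<exists>s0. 2 * D P (\<gamma> s0) + \<bar>\<tau>\<bar> \<le> D P (T P)"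
proof -
  obtain s0 where s0: "\<And>s. D P (\<gamma> s) = D P (\<gamma> s0) + \<bar>s - s0\<bar>" using line_projection[OF L P] by blast
  define r where "r = D P (\<gamma> s0)"
  have gR: "\<gamma> s \<in> S" for s using geodesic_lineD[OF L] by blast
  have TP: "T P \<in> S" using T_in P by blast
  have DT: "D (T P) (\<gamma> s) = r + \<bar>s - \<tau> - s0\<bar>" for s
  proof -
    have e: "\<gamma> s = T (\<gamma> (s - \<tau>))" using T_shift[of "s - \<tau>"] by simp
    have "D (T P) (\<gamma> s) = D (T P) (T (\<gamma> (s - \<tau>)))" using e by (rule arg_cong[where f="D (T P)"])
    also have "\<dots> = D P (\<gamma> (s - \<tau>))" using T_iso[OF P gR] .
    finally have "D (T P) (\<gamma> s) = D P (\<gamma> (s - \<tau>))" .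
    then show ?thesis using s0[of "s - \<tau>"] r_def by simp
  qed
  have "D P (\<gamma> (s0 + \<tau>)) + D (T P) (\<gamma> s0)
      \<le> max (D P (T P) + D (\<gamma> (s0 + \<tau>)) (\<gamma> s0)) (D P (\<gamma> s0) + D (\<gamma> (s0 + \<tau>)) (T P))"
    using four_point P TP gR by blast
  moreover have "D (\<gamma> (s0 + \<tau>)) (T P) = D (T P) (\<gamma> (s0 + \<tau>))" using D_sym TP gR by blast
  ultimately have "r + \<bar>\<tau>\<bar> + (r + \<bar>\<tau>\<bar>) \<le> max (D P (T P) + \<bar>\<tau>\<bar>) (r + r)"
    using s0[of "s0 + \<tau>"] DT[of s0] DT[of "s0 + \<tau>"] geodesic_lineD(2)[OF L] r_def by simp
  then have "2 * r + \<bar>\<tau>\<bar> \<le> D P (T P)" using tau by (auto simp: max_def split: if_splits)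
  then show ?thesis using r_def by blast
qed

text \<open>The displacement estimate for both lines forces \<open>\<bar>\<tau>\<bar> = \<bar>\<sigma>\<bar>\<close> and distance \<open>0\<close> from every point
  of \<open>\<eta>\<close> to \<open>\<gamma>\<close>.\<close>

lemma translation_axis_unique:
  assumes L1: "geodesic_line \<gamma>" and L2: "geodesic_line \<eta>"
    and T_in: "\<And>P. P \<in> S \<Longrightarrow> T P \<in> S"
    and T_iso: "\<And>P Q. P \<in> S \<Longrightarrow> Q \<in> S \<Longrightarrow> D (T P) (T Q) = D P Q"
    and T1: "\<And>s. T (\<gamma> s) = \<gamma> (s + \<tau>)" and tau: "\<tau> \<noteq> 0"
    and T2: "\<And>s. T (\<eta> s) = \<eta> (s + \<sigma>)" and sig: "\<sigma> \<noteq> 0"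
  shows "range \<eta> \<subseteq> range \<gamma>"
proof
  fix P assume "P \<in> range \<eta>"
  then obtain t where t: "P = \<eta> t" by blast
  have PR: "P \<in> S" using t geodesic_lineD[OF L2] by blast
  obtain s0 where s0: "2 * D P (\<gamma> s0) + \<bar>\<tau>\<bar> \<le> D P (T P)"
    using translation_displacement[OF L1 T_in T_iso T1 tau PR] by blast
  have "D P (T P) = \<bar>\<sigma>\<bar>" using t T2 geodesic_lineD(2)[OF L2] by simp
  have QR: "\<gamma> 0 \<in> S" using geodesic_lineD[OF L1] by blast
  obtain s1 where s1: "2 * D (\<gamma> 0) (\<eta> s1) + \<bar>\<sigma>\<bar> \<le> D (\<gamma> 0) (T (\<gamma> 0))"
    using translation_displacement[OF L2 T_in T_iso T2 sig QR] by blast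
  have "D (\<gamma> 0) (T (\<gamma> 0)) = \<bar>\<tau>\<bar>" using T1 geodesic_lineD(2)[OF L1] by simp
  have "0 \<le> D (\<gamma> 0) (\<eta> s1)" using D_nonneg QR geodesic_lineD[OF L2] by blast
  then have "D P (\<gamma> s0) \<le> 0" using s0 s1 \<open>D P (T P) = \<bar>\<sigma>\<bar>\<close> \<open>D (\<gamma> 0) (T (\<gamma> 0)) = \<bar>\<tau>\<bar>\<close> by simp
  then have "D P (\<gamma> s0) = 0" using D_nonneg PR geodesic_lineD[OF L1] by (simp add: order_antisym)
  then have "P = \<gamma> s0" using D_eq_0 PR geodesic_lineD[OF L1] by blast
  then show "P \<in> range \<gamma>" by simp
qed

lemma line_between:
  assumes L: "geodesic_line \<gamma>" "a \<le> s" "s \<le> b"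
  shows "between (\<gamma> a) (\<gamma> s) (\<gamma> b)"
  unfolding between_def using geodesic_lineD(2)[OF L(1)] L by simp

lemma between_on_line:
  assumes L: "geodesic_line \<eta>" and Z: "Z \<in> S" and B: "between (\<eta> v2) Z (\<eta> v1)"
  shows "\<exists>t. Z = \<eta> t"
proof -
  have R: "\<eta> x \<in> S" for x using geodesic_lineD[OF L] by blast
  define \<rho> where "\<rho> = D (\<eta> v2) Z"
  have r0: "0 \<le> \<rho>" unfolding \<rho>_def using D_nonneg R Z by blast
  have "0 \<le> D Z (\<eta> v1)" using D_nonneg R Z by blast
  then have rle: "\<rho> \<le> \<bar>v1 - v2\<bar>" using B geodesic_lineD(2)[OF L, of v2 v1]
    unfolding between_def \<rho>_def
    by (simp add: abs_minus_commute)
  obtain t where d1: "\<bar>t - v2\<bar> = \<rho>" and "\<bar>v1 - t\<bar> = \<bar>v1 - v2\<bar> - \<rho>"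
    using real_point_at_distance[OF r0 rle] by blast
  then have "between (\<eta> v2) (\<eta> t) (\<eta> v1)"
    unfolding between_def using geodesic_lineD(2)[OF L] by (simp add: abs_minus_commute)
  moreover have "D (\<eta> v2) Z = D (\<eta> v2) (\<eta> t)" using d1 geodesic_lineD(2)[OF L] \<rho>_def
    by (simp add: abs_minus_commute)
  ultimately show ?thesis using between_unique[of "\<eta> v2" "\<eta> v1" Z "\<eta> t"] R Z B by blast
qed

lemma close_lines_meet:
  assumes L1: "geodesic_line \<gamma>" and L2: "geodesic_line \<eta>"
    and n1: "D (\<gamma> u1) (\<eta> v1) \<le> \<epsilon>" and n2: "D (\<gamma> u2) (\<eta> v2) \<le> \<epsilon>"
    and s: "u1 + \<epsilon> < s" "s < u2 - \<epsilon>"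
  shows "\<exists>t. \<gamma> s = \<eta> t"
proof -
  have R1: "\<gamma> x \<in> S" for x using geodesic_lineD[OF L1] by blast
  have R2: "\<eta> x \<in> S" for x using geodesic_lineD[OF L2] by blast
  have e0: "0 \<le> \<epsilon>" using n1 D_nonneg R1 R2 by (meson order_trans)
  have b0: "between (\<gamma> u1) (\<gamma> s) (\<gamma> u2)" using line_between[OF L1] s e0 by simp
  have "D (\<gamma> u1) (\<eta> v1) < D (\<gamma> u1) (\<gamma> s)" using n1 s geodesic_lineD(2)[OF L1, of u1 s] e0 by simp
  then have b1: "between (\<eta> v1) (\<gamma> s) (\<gamma> u2)" using between_shift[OF R1 R2 R1 R1 b0] by blast
  then have b1': "between (\<gamma> u2) (\<gamma> s) (\<eta> v1)" using between_sym R1 R2 by blast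
  have "D (\<gamma> u2) (\<eta> v2) < D (\<gamma> u2) (\<gamma> s)" using n2 s geodesic_lineD(2)[OF L1, of u2 s] e0 by simp
  then have "between (\<eta> v2) (\<gamma> s) (\<eta> v1)" using between_shift[OF R1 R2 R1 R2 b1'] by blast
  then show ?thesis using between_on_line[OF L2 R1] by metis
qed

lemma close_lines_overlap:
  assumes L1: "geodesic_line \<gamma>" and L2: "geodesic_line \<eta>"
    and n1: "D (\<gamma> u1) (\<eta> v1) \<le> \<epsilon>" and n2: "D (\<gamma> u2) (\<eta> v2) \<le> \<epsilon>"
    and long: "u1 + \<epsilon> < u2 - \<epsilon>"
  shows "\<exists>e c0. (e = 1 \<or> e = -1) \<and> (\<forall>s. u1 + \<epsilon> < s \<and> s < u2 - \<epsilon> \<longrightarrow> \<gamma> s = \<eta> (c0 + e * s))"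
proof -
  define A where "A = {s. u1 + \<epsilon> < s \<and> s < u2 - \<epsilon>}"
  have "\<forall>s\<in>A. \<exists>t. \<gamma> s = \<eta> t" using close_lines_meet[OF L1 L2 n1 n2] A_def by blast
  then obtain \<theta> where \<theta>: "\<And>s. s \<in> A \<Longrightarrow> \<gamma> s = \<eta> (\<theta> s)" by metis
  have iso: "\<bar>\<theta> s - \<theta> t\<bar> = \<bar>s - t\<bar>" if "s \<in> A" "t \<in> A" for s t
    using geodesic_lineD(2)[OF L1, of s t] geodesic_lineD(2)[OF L2, of "\<theta> s" "\<theta> t"]
      \<theta>[OF that(1)] \<theta>[OF that(2)] by simp
  define m where "m = (u1 + u2) / 2"
  define m' where "m' = m + (u2 - \<epsilon> - m) / 2"
  have mA: "m \<in> A" "m' \<in> A" "m' \<noteq> m" using long unfolding A_def m_def m'_def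
    by (auto simp: field_simps)
  obtain e where e: "e = 1 \<or> e = -1" "\<forall>s\<in>A. \<theta> s = \<theta> m + e * (s - m)"
    using real_isometry_affine[of A \<theta> m m'] iso mA by blast
  have "\<forall>s. u1 + \<epsilon> < s \<and> s < u2 - \<epsilon> \<longrightarrow> \<gamma> s = \<eta> ((\<theta> m - e * m) + e * s)"
  proof (intro allI impI)
    fix s assume "u1 + \<epsilon> < s \<and> s < u2 - \<epsilon>"
    then have "s \<in> A" unfolding A_def by simp
    then show "\<gamma> s = \<eta> ((\<theta> m - e * m) + e * s)" using \<theta> e(2) by (simp add: algebra_simps)
  qed
  then show ?thesis using e(1) by blast
qed

end

section \<open>The realization of a tree\<close>

definition vertex_point :: "'a \<Rightarrow> 'a \<Rightarrow> real" where "vertex_point u = (\<lambda>w. if w = u then 1 else 0)"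

lemma supp_vertex_point [simp]: "supp (vertex_point u) = {u}"
  unfolding supp_def vertex_point_def by auto

lemma vertex_point_in_realization[simp]: "vertex_point u \<in> realization E"
  unfolding realization_def vertex_point_def by auto

lemma vertex_point_inj: "vertex_point u = vertex_point v \<longleftrightarrow> u = v"
  unfolding vertex_point_def by (metis zero_neq_one)

context rooted_tree
begin

text \<open>Points of the realization in coordinates: \<open>edge_point c r\<close> lies at distance \<open>r\<close> from the
  vertex \<open>c\<close> towards its parent, \<open>point_height\<close> is its distance to the root, and \<open>meet_level\<close> is
  the height at which the geodesics from two points to the root merge. Then \<open>coord_dist\<close> is the
  usual formula for the distance in a rooted tree; \<open>tdist_edge_point\<close> shows that it is \<open>tdist\<close>.\<close>

definition edge_point :: "'a \<Rightarrow> real \<Rightarrow> 'a \<Rightarrow> real" where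
  "edge_point c r = (\<lambda>w. (if w = c then 1 - r else 0) + (if w = parent c then r else 0))"

definition edge_coords :: "'a \<Rightarrow> real \<Rightarrow> bool" where
  "edge_coords c r \<longleftrightarrow> 0 \<le> r \<and> r < 1 \<and> (r \<noteq> 0 \<longrightarrow> c \<noteq> root)"

definition point_height :: "'a \<Rightarrow> real \<Rightarrow> real" where
  "point_height c r = real (height c) - r"

definition meet_level :: "'a \<Rightarrow> real \<Rightarrow> 'a \<Rightarrow> real \<Rightarrow> real" where
  "meet_level c r c' r' =
    min (point_height c r) (min (point_height c' r') (real (meet_height c c')))"

definition coord_dist :: "'a \<Rightarrow> real \<Rightarrow> 'a \<Rightarrow> real \<Rightarrow> real" where
  "coord_dist c r c' r' = point_height c r + point_height c' r' - 2 * meet_level c r c' r'"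

lemma edge_point_0[simp]: "edge_point c 0 = vertex_point c"
  unfolding edge_point_def vertex_point_def by auto

lemma edge_coords_0[simp]: "edge_coords c 0"
  unfolding edge_coords_def by simp

lemma edge_point_base: "edge_coords c r \<Longrightarrow> edge_point c r c = 1 - r"
  unfolding edge_point_def edge_coords_def using parent_neq[of c] by (cases "r = 0") auto

lemma edge_point_parent: "edge_coords c r \<Longrightarrow> r \<noteq> 0 \<Longrightarrow> edge_point c r (parent c) = r"
  unfolding edge_point_def edge_coords_def using parent_neq[of c] by auto

lemma supp_edge_point:
  assumes "edge_coords c r"
  shows "supp (edge_point c r) = (if r = 0 then {c} else {c, parent c})"
proof (cases "r = 0")
  case True
  then show ?thesis by simp
next
  case False
  then have "c \<noteq> root" "r < 1" using assms unfolding edge_coords_def by auto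
  then have "parent c \<noteq> c" using parent_neq by blast
  then show ?thesis using False \<open>r < 1\<close> unfolding supp_def edge_point_def by auto
qed

lemma supp_edge_point_subset: "edge_coords c r \<Longrightarrow> supp (edge_point c r) \<subseteq> {c, parent c}"
  using supp_edge_point by (auto split: if_splits)

lemma base_in_supp: "edge_coords c r \<Longrightarrow> c \<in> supp (edge_point c r)"
  using supp_edge_point by (auto split: if_splits)

lemma realization_edge_point:
  assumes "P \<in> realization E"
  shows "\<exists>c r. edge_coords c r \<and> P = edge_point c r"
proof -
  consider (v) u where "P = (\<lambda>w. if w = u then 1 else 0)"
    | (e) a b t where "E a b" "0 < t" "t < 1"
        "P = (\<lambda>w. if w = a then 1 - t else if w = b then t else 0)"
    using assms unfolding realization_def by blast
  then show ?thesis
  proof cases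
    case v
    then have "P = edge_point u 0" by (simp add: vertex_point_def)
    then show ?thesis using edge_coords_0 by blast
  next
    case e
    have "a \<noteq> b" using e loop_free by blast
    from edge_cases[OF e(1)] show ?thesis
    proof
      assume A: "a \<noteq> root \<and> b = parent a"
      have "P = edge_point a t" using A \<open>a \<noteq> b\<close> e(4) unfolding edge_point_def by auto
      moreover have "edge_coords a t" using A e unfolding edge_coords_def by auto
      ultimately show ?thesis by blast
    next
      assume A: "b \<noteq> root \<and> a = parent b"
      have "P = edge_point b (1 - t)" using A \<open>a \<noteq> b\<close> e(4) unfolding edge_point_def
        by (auto simp: fun_eq_iff)
      moreover have "edge_coords b (1 - t)" using A e unfolding edge_coords_def by auto
      ultimately show ?thesis by blast
    qed
  qed
qed

lemma coord_dist_sym: "coord_dist c r c' r' = coord_dist c' r' c r"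
  unfolding coord_dist_def meet_level_def using meet_height_sym[of c c']
    by (simp add: min.commute min.left_commute)

lemma meet_level_ultrametric:
  "min (meet_level c1 r1 c2 r2) (meet_level c2 r2 c3 r3) \<le> meet_level c1 r1 c3 r3"
proof -
  have "min (meet_height c1 c2) (meet_height c2 c3) \<le> meet_height c1 c3"
    by (rule meet_height_ultrametric)
  then have "min (real (meet_height c1 c2)) (real (meet_height c2 c3)) \<le> real (meet_height c1 c3)"
    by (metis of_nat_le_iff of_nat_min)
  then show ?thesis unfolding meet_level_def by linarith
qed

lemma meet_level_le:
  "meet_level c r c' r' \<le> point_height c r" "meet_level c r c' r' \<le> point_height c' r'"
  unfolding meet_level_def by auto

lemma coord_dist_triangle: "coord_dist c1 r1 c3 r3 \<le> coord_dist c1 r1 c2 r2 + coord_dist c2 r2 c3 r3"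
  using meet_level_ultrametric[of c1 r1 c2 r2 c3 r3] meet_level_le[of c1 r1 c2 r2]
    meet_level_le[of c2 r2 c3 r3]
  unfolding coord_dist_def by linarith

lemma coord_dist_self: assumes "0 \<le> r" shows "coord_dist c r c r = 0"
proof -
  have "meet_height c c = height c" by simp
  moreover have "point_height c r \<le> real (height c)" unfolding point_height_def using assms by simp
  ultimately show ?thesis unfolding coord_dist_def meet_level_def point_height_def
    by (simp add: min_def)
qed

lemma coord_dist_vertices: "coord_dist a 0 b 0 = real (d a b)"
proof -
  have "meet_height a b \<le> height a" "meet_height a b \<le> height b" using meet_height by auto
  then have "meet_level a 0 b 0 = real (meet_height a b)" unfolding meet_level_def point_height_def
    by simp
  moreover have "2 * meet_height a b \<le> height a + height b"
    using \<open>meet_height a b \<le> height a\<close> \<open>meet_height a b \<le> height b\<close> by simp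
  ultimately show ?thesis unfolding coord_dist_def point_height_def using d_eq_meet_formula[of a b]
    by (simp add: of_nat_diff)
qed

lemma coord_dist_base: "edge_coords c r \<Longrightarrow> coord_dist c r c 0 = r"
  unfolding coord_dist_def meet_level_def point_height_def edge_coords_def
    by (simp add: min_def)

lemma coord_dist_parent:
  assumes "edge_coords c r" "r \<noteq> 0"
  shows "coord_dist c r (parent c) 0 = 1 - r"
proof -
  have "c \<noteq> root" "r < 1" "0 \<le> r" using assms unfolding edge_coords_def by auto
  then have "meet_height c (parent c) = height (parent c)" "height c = Suc (height (parent c))"
    using meet_height_parent parent(2) by auto
  then show ?thesis unfolding coord_dist_def meet_level_def point_height_def using \<open>r < 1\<close>
    by (simp add: min_def)
qed

lemma edge_point_supp_value:
  assumes "edge_coords c r" "a \<in> supp (edge_point c r)"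
  shows "1 - edge_point c r a = coord_dist c r a 0"
proof (cases "r = 0")
  case True
  then have "a = c" using assms supp_edge_point by auto
  then show ?thesis using True coord_dist_base[OF assms(1)] edge_point_base[OF assms(1)] by simp
next
  case False
  then have "a = c \<or> a = parent c" using assms supp_edge_point by auto
  then show ?thesis
  proof
    assume "a = c" then show ?thesis using coord_dist_base[OF assms(1)] edge_point_base[OF assms(1)]
      by simp
  next
    assume "a = parent c" then show ?thesis
      using coord_dist_parent[OF assms(1) False] edge_point_parent[OF assms(1) False] by simp
  qed
qed

lemma proper_ancestor_height_less:
  assumes "c \<noteq> c'" "meet_height c c' = height c"
  shows "height c < height c'"
proof (rule ccontr)
  assume "\<not> height c < height c'"
  then have "height c' = height c" using meet_height(2)[of c c'] assms(2) by simp
  then show False using meet_height(3)[of c c'] assms ancestor_height by metis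
qed

lemma coord_dist_via_parent:
  assumes cr: "edge_coords c r" "r \<noteq> 0"
    and "meet_height c c' \<le> height (parent c) \<or> point_height c' r' \<le> real (height (parent c))"
  shows "coord_dist c r c' r' = coord_dist c r (parent c) 0 + coord_dist (parent c) 0 c' r'"
proof -
  have cw: "c \<noteq> root" and r01: "0 < r" "r < 1" using cr unfolding edge_coords_def by auto
  have "real (meet_height (parent c) c') = min (real (meet_height c c')) (real (height (parent c)))"
    using meet_height_parent_left[OF cw] by simp
  moreover have "real (height c) = real (height (parent c)) + 1" using parent(2)[OF cw] by simp
  ultimately show ?thesis
    using assms r01 coord_dist_parent[OF cr] meet_height_parent[OF cw]
    unfolding coord_dist_def meet_level_def point_height_def by (simp add: min_def split: if_splits)
qed

lemma coord_dist_via_base: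
  assumes cr: "edge_coords c r" "edge_coords c' r'"
    and "c \<noteq> c'" and meet: "meet_height c c' = height c"
  shows "coord_dist c r c' r' = coord_dist c r c 0 + coord_dist c 0 c' r'"
proof -
  have "real (height c) + 1 \<le> real (height c')"
    using proper_ancestor_height_less[OF assms(3,4)] by simp
  then have "point_height c' r' > real (height c)"
    using cr(2) unfolding point_height_def edge_coords_def by simp
  then show ?thesis
    using cr(1) unfolding coord_dist_def meet_level_def meet edge_coords_def
    by (simp add: point_height_def min_def)
qed

text \<open>A geodesic from a point of the realization leaves it through a vertex of its support.\<close>

lemma coord_dist_exit:
  assumes cr: "edge_coords c r" "edge_coords c' r'" and ne: "r = 0 \<or> c \<noteq> c'"
  shows "\<exists>a \<in> supp (edge_point c r). coord_dist c r c' r' = coord_dist c r a 0 + coord_dist a 0 c' r'"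
proof (cases "r = 0")
  case True
  have "coord_dist c r c r = 0" using coord_dist_self[of r c] cr(1) unfolding edge_coords_def
    by simp
  then show ?thesis using True base_in_supp[OF cr(1)] by (intro bexI[of _ c]) auto
next
  case False
  then have cw: "c \<noteq> root" using cr(1) unfolding edge_coords_def by simp
  show ?thesis
  proof (cases "meet_height c c' \<le> height (parent c) \<or> point_height c' r' \<le> real (height (parent c))")
    case True
    then show ?thesis
      using coord_dist_via_parent[OF cr(1) False] supp_edge_point[OF cr(1)] False by auto
  next
    case False
    then have "meet_height c c' = height c"
      using meet_height(1)[of c c'] parent(2)[OF cw] by auto
    then show ?thesis
      using coord_dist_via_base[OF cr] ne \<open>r \<noteq> 0\<close> base_in_supp[OF cr(1)] by blast
  qed
qed

lemma base_on_edge: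
  assumes "edge_coords c r" "e \<noteq> root" "supp (edge_point c r) \<subseteq> {e, parent e}"
  shows "c = e \<or> (c = parent e \<and> r = 0)"
proof -
  have "c \<in> {e, parent e}" using base_in_supp[OF assms(1)] assms(3) by blast
  moreover have False if "c = parent e" "r \<noteq> 0"
  proof -
    have cw: "c \<noteq> root" using assms(1) that(2) unfolding edge_coords_def by simp
    have "parent c \<in> {e, parent e}" using supp_edge_point[OF assms(1)] that(2) assms(3) by auto
    moreover have "parent c \<noteq> c" using parent_neq[OF cw] .
    ultimately have "parent c = e" using that(1) by auto
    then have "height e = height (parent c)" by simp
    moreover have "Suc (height (parent c)) = height c" using parent(2)[OF cw] .
    moreover have "Suc (height c) = height e" using parent(2)[OF assms(2)] that(1) by simp
    ultimately show False by simp
  qed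
  ultimately show ?thesis by blast
qed

lemma position_on_edge:
  assumes "edge_coords c r" "e \<noteq> root" "supp (edge_point c r) \<subseteq> {e, parent e}"
  shows "\<exists>\<rho>. 0 \<le> \<rho> \<and> \<rho> \<le> 1 \<and> edge_point c r e = 1 - \<rho> \<and> edge_point c r (parent e) = \<rho> \<and>
    point_height c r = real (height e) - \<rho> \<and> (c = e \<or> c = parent e \<and> \<rho> = 1)"
proof -
  have pe: "parent e \<noteq> e" using parent_neq[OF assms(2)] .
  have he: "height e = Suc (height (parent e))" using parent(2)[OF assms(2)] by simp
  from base_on_edge[OF assms] show ?thesis
  proof
    assume ce: "c = e"
    have "edge_point c r (parent e) = r"
    proof (cases "r = 0")
      case True then show ?thesis using pe ce by (simp add: vertex_point_def)
    next
      case False then show ?thesis using edge_point_parent[OF assms(1) False] ce by simp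
    qed
    then show ?thesis using ce edge_point_base[OF assms(1)] assms(1)
      unfolding edge_coords_def point_height_def
      by (intro exI[of _ r]) auto
  next
    assume "c = parent e \<and> r = 0"
    then show ?thesis using pe he unfolding point_height_def
      by (intro exI[of _ 1]) (auto simp: vertex_point_def)
  qed
qed

lemma half_l1_dist_on_edge:
  assumes cr: "edge_coords c r" "edge_coords c' r'" and e: "e \<noteq> root"
    and s1: "supp (edge_point c r) \<subseteq> {e, parent e}"
    and s2: "supp (edge_point c' r') \<subseteq> {e, parent e}"
  shows "(\<Sum>w\<in>supp (edge_point c r) \<union> supp (edge_point c' r'). \<bar>edge_point c r w - edge_point c' r' w\<bar>) / 2
    = coord_dist c r c' r'"
proof -
  define P Q where "P = edge_point c r" and "Q = edge_point c' r'"
  obtain \<rho> where \<rho>: "0 \<le> \<rho>" "\<rho> \<le> 1" "P e = 1 - \<rho>" "P (parent e) = \<rho>"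
    "point_height c r = real (height e) - \<rho>" "c = e \<or> c = parent e \<and> \<rho> = 1"
    using position_on_edge[OF cr(1) e s1] unfolding P_def by blast
  obtain \<sigma> where \<sigma>: "0 \<le> \<sigma>" "\<sigma> \<le> 1" "Q e = 1 - \<sigma>" "Q (parent e) = \<sigma>"
    "point_height c' r' = real (height e) - \<sigma>" "c' = e \<or> c' = parent e \<and> \<sigma> = 1"
    using position_on_edge[OF cr(2) e s2] unfolding Q_def by blast
  have "(\<Sum>w\<in>supp P \<union> supp Q. \<bar>P w - Q w\<bar>) = (\<Sum>w\<in>{e, parent e}. \<bar>P w - Q w\<bar>)"
    by (rule sum.mono_neutral_left) (use s1 s2 in \<open>auto simp: P_def Q_def supp_def\<close>)
  also have "\<dots> = 2 * \<bar>\<rho> - \<sigma>\<bar>" using parent_neq[OF e] \<rho> \<sigma> by simp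
  finally have sum: "(\<Sum>w\<in>supp P \<union> supp Q. \<bar>P w - Q w\<bar>) / 2 = \<bar>\<rho> - \<sigma>\<bar>" by simp
  have "min (point_height c r) (point_height c' r') \<le> real (meet_height c c')"
    using \<rho>(1,5,6) \<sigma>(1,5,6) meet_height_parent[OF e] meet_height_sym[of "parent e" e] parent(2)[OF e]
    by (auto simp: min_def)
  then have "meet_level c r c' r' = min (point_height c r) (point_height c' r')"
    unfolding meet_level_def min_def by (auto split: if_splits)
  then have "coord_dist c r c' r' = \<bar>\<rho> - \<sigma>\<bar>"
    unfolding coord_dist_def using \<rho>(5) \<sigma>(5) by (simp add: min_def)
  then show ?thesis using sum unfolding P_def Q_def by simp
qed

lemma half_l1_dist_on_common_edge:
  assumes cr: "edge_coords c r" "edge_coords c' r'" and uv: "u = v \<or> E u v"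
    and supp: "supp (edge_point c r) \<subseteq> {u, v}" "supp (edge_point c' r') \<subseteq> {u, v}"
  shows "(\<Sum>w\<in>supp (edge_point c r) \<union> supp (edge_point c' r'). \<bar>edge_point c r w - edge_point c' r' w\<bar>) / 2
    = coord_dist c r c' r'"
proof (cases "u = v")
  case True
  have "c = u" "c' = u" using base_in_supp[OF cr(1)] base_in_supp[OF cr(2)] supp True by auto
  have "r = 0" "r' = 0"
    using supp_edge_point[OF cr(1)] supp_edge_point[OF cr(2)] supp True \<open>c = u\<close> \<open>c' = u\<close>
      parent_neq cr unfolding edge_coords_def by (auto split: if_splits)
  then show ?thesis using coord_dist_self[of 0 u] \<open>c = u\<close> \<open>c' = u\<close> by simp
next
  case False
  then have "E u v" using uv by simp
  from edge_cases[OF this] show ?thesis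
  proof
    assume "u \<noteq> root \<and> v = parent u"
    then show ?thesis using half_l1_dist_on_edge[OF cr, of u] supp by simp
  next
    assume A: "v \<noteq> root \<and> u = parent v"
    then have "{u, v} = {v, parent v}" by auto
    then show ?thesis using half_l1_dist_on_edge[OF cr, of v] supp A by simp
  qed
qed

lemma coord_dist_le_exit_sum:
  assumes cr: "edge_coords c r" "edge_coords c' r'"
    and ab: "a \<in> supp (edge_point c r)" "b \<in> supp (edge_point c' r')"
  shows "coord_dist c r c' r' \<le> (1 - edge_point c r a) + real (d a b) + (1 - edge_point c' r' b)"
proof -
  have "(1 - edge_point c r a) + real (d a b) + (1 - edge_point c' r' b)
      = coord_dist c r a 0 + coord_dist a 0 b 0 + coord_dist b 0 c' r'"
    using ab edge_point_supp_value[OF cr(1)] edge_point_supp_value[OF cr(2)]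
      coord_dist_vertices[of a b] coord_dist_sym[of c' r' b 0] by simp
  moreover have "coord_dist c r c' r' \<le> coord_dist c r a 0 + coord_dist a 0 c' r'"
    by (rule coord_dist_triangle)
  moreover have "coord_dist a 0 c' r' \<le> coord_dist a 0 b 0 + coord_dist b 0 c' r'"
    by (rule coord_dist_triangle)
  ultimately show ?thesis by simp
qed

lemma coord_dist_eq_exit_sum:
  assumes cr: "edge_coords c r" "edge_coords c' r'" and ne: "r = 0 \<or> c \<noteq> c'"
  shows "\<exists>a \<in> supp (edge_point c r). \<exists>b \<in> supp (edge_point c' r').
    coord_dist c r c' r' = (1 - edge_point c r a) + real (d a b) + (1 - edge_point c' r' b)"
proof -
  obtain a where a: "a \<in> supp (edge_point c r)"
    "coord_dist c r c' r' = coord_dist c r a 0 + coord_dist a 0 c' r'"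
    using coord_dist_exit[OF cr ne] by blast
  obtain b where b: "b \<in> supp (edge_point c' r')"
    "coord_dist a 0 c' r' = coord_dist a 0 b 0 + coord_dist b 0 c' r'"
  proof (cases "r' = 0 \<or> c' \<noteq> a")
    case True
    then obtain b where "b \<in> supp (edge_point c' r')"
      "coord_dist c' r' a 0 = coord_dist c' r' b 0 + coord_dist b 0 a 0"
      using coord_dist_exit[OF cr(2) edge_coords_0[of a]] by blast
    then show ?thesis
      using that coord_dist_sym[of a 0 c' r'] coord_dist_sym[of c' r' b 0] coord_dist_sym[of b 0 a 0]
      by simp
  next
    case False
    then show ?thesis using that[of a] base_in_supp[OF cr(2)] coord_dist_self[of 0 a] by simp
  qed
  have "coord_dist c r c' r' = (1 - edge_point c r a) + real (d a b) + (1 - edge_point c' r' b)"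
    using a b edge_point_supp_value[OF cr(1)] edge_point_supp_value[OF cr(2)]
      coord_dist_vertices[of a b] coord_dist_sym[of c' r' b 0] by simp
  then show ?thesis using a(1) b(1) by blast
qed

lemma tdist_edge_point:
  assumes cr: "edge_coords c r" "edge_coords c' r'"
  shows "tdist E (edge_point c r) (edge_point c' r') = coord_dist c r c' r'"
proof (cases "\<exists>u v. (u = v \<or> E u v) \<and> supp (edge_point c r) \<subseteq> {u, v} \<and> supp (edge_point c' r') \<subseteq> {u, v}")
  case True
  then show ?thesis using half_l1_dist_on_common_edge[OF cr] unfolding tdist_def by auto
next
  case False
  define P where "P = edge_point c r"
  define Q where "Q = edge_point c' r'"
  define M where "M = {(1 - P a) + real (d a b) + (1 - Q b) | a b. a \<in> supp P \<and> b \<in> supp Q}"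
  have "finite M" unfolding M_def
    by (rule finite_image_set2) (use supp_edge_point[OF cr(1)] supp_edge_point[OF cr(2)] P_def Q_def in auto)
  moreover have "r = 0 \<or> c \<noteq> c'"
    using False edge_parent supp_edge_point_subset[OF cr(1)] supp_edge_point_subset[OF cr(2)] cr(1)
    unfolding edge_coords_def by blast
  then have "coord_dist c r c' r' \<in> M"
    using coord_dist_eq_exit_sum[OF cr] unfolding M_def P_def Q_def by blast
  moreover have "coord_dist c r c' r' \<le> y" if "y \<in> M" for y
    using that coord_dist_le_exit_sum[OF cr] unfolding M_def P_def Q_def by blast
  ultimately have "Min M = coord_dist c r c' r'" by (intro Min_eqI) auto
  moreover have "tdist E P Q = Min M"
    unfolding tdist_def M_def P_def Q_def by (rule if_not_P[OF False])
  ultimately show ?thesis unfolding P_def Q_def by simp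
qed

lemma meet_level_sym: "meet_level c r c' r' = meet_level c' r' c r"
  unfolding meet_level_def using meet_height_sym[of c c']
    by (simp add: min.commute min.left_commute)

lemma coord_dist_four_point:
  "coord_dist c1 r1 c2 r2 + coord_dist c3 r3 c4 r4
    \<le> max (coord_dist c1 r1 c3 r3 + coord_dist c2 r2 c4 r4) (coord_dist c1 r1 c4 r4 + coord_dist c2 r2 c3 r3)"
proof -
  define m where "m x y = meet_level (fst x) (snd x) (fst y) (snd y)" for x y :: "'a \<times> real"
  have "min (m (c1, r1) (c3, r3) + m (c2, r2) (c4, r4)) (m (c1, r1) (c4, r4) + m (c2, r2) (c3, r3))
      \<le> m (c1, r1) (c2, r2) + m (c3, r3) (c4, r4)"
    by (rule four_point_of_ultrametric) (use meet_level_sym meet_level_ultrametric in \<open>auto simp: m_def\<close>)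
  then show ?thesis unfolding coord_dist_def m_def by (simp add: max_def min_def split: if_splits)
qed

lemma coord_dist_eq_0:
  assumes "edge_coords c r" "edge_coords c' r'" "coord_dist c r c' r' = 0"
  shows "c = c' \<and> r = r'"
proof -
  have m: "meet_level c r c' r' = point_height c r" "meet_level c r c' r' = point_height c' r'"
    using assms(3) meet_level_le[of c r c' r'] unfolding coord_dist_def by linarith+
  then have "point_height c r \<le> real (meet_height c c')" "point_height c' r' \<le> real (meet_height c c')"
    unfolding meet_level_def by (simp_all add: min_def split: if_splits)
  moreover have "meet_height c c' \<le> height c" "meet_height c c' \<le> height c'" using meet_height
    by auto
  moreover have "0 \<le> r" "r < 1" "0 \<le> r'" "r' < 1" using assms unfolding edge_coords_def by auto
  ultimately have "real (height c) - 1 < real (meet_height c c')"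
    "real (height c') - 1 < real (meet_height c c')"
    unfolding point_height_def by linarith+
  then have "height c \<le> meet_height c c'" "height c' \<le> meet_height c c'" by linarith+
  then have lc: "meet_height c c' = height c" "meet_height c c' = height c'"
    using \<open>meet_height c c' \<le> height c\<close> \<open>meet_height c c' \<le> height c'\<close> by auto
  have "ancestor c (height c) = ancestor c' (height c)" using meet_height(3)[of c c'] lc by simp
  then have "c = c'" using lc ancestor_height by metis
  moreover have "r = r'" using m \<open>c = c'\<close> unfolding point_height_def by simp
  ultimately show ?thesis by simp
qed

lemma realization_edge_point_obtain:
  assumes "P \<in> realization E"
  obtains c r where "edge_coords c r" "P = edge_point c r"
  using realization_edge_point[OF assms] by blast

lemma tdist_vertex_points: "tdist E (vertex_point u) (vertex_point v) = real (d u v)"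
  using tdist_edge_point[of u 0 v 0] coord_dist_vertices by simp

lemma zero_hyperbolic_realization: "zero_hyperbolic (realization E) (tdist E)"
proof
  fix P Q Z P1 P2 P3 P4
  assume P: "P \<in> realization E" and Q: "Q \<in> realization E" and Z: "Z \<in> realization E"
  obtain c r where c: "edge_coords c r" "P = edge_point c r"
    using realization_edge_point_obtain[OF P] .
  obtain c' r' where c': "edge_coords c' r'" "Q = edge_point c' r'"
    using realization_edge_point_obtain[OF Q] .
  obtain c'' r'' where c'': "edge_coords c'' r''" "Z = edge_point c'' r''"
    using realization_edge_point_obtain[OF Z] .
  show "tdist E P Q = tdist E Q P" using c c' by (simp add: tdist_edge_point coord_dist_sym)
  show "tdist E P P = 0" using c by (simp add: tdist_edge_point coord_dist_self edge_coords_def)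
  show "tdist E P Q = 0 \<Longrightarrow> P = Q"
    using c c' coord_dist_eq_0[OF c(1) c'(1)] by (simp add: tdist_edge_point)
  show "tdist E P Q \<le> tdist E P Z + tdist E Z Q"
    using c c' c'' by (simp add: tdist_edge_point coord_dist_triangle)
  assume P1234: "P1 \<in> realization E" "P2 \<in> realization E" "P3 \<in> realization E" "P4 \<in> realization E"
  obtain c1 r1 where "edge_coords c1 r1" "P1 = edge_point c1 r1"
    using realization_edge_point_obtain[OF P1234(1)] .
  moreover obtain c2 r2 where "edge_coords c2 r2" "P2 = edge_point c2 r2"
    using realization_edge_point_obtain[OF P1234(2)] .
  moreover obtain c3 r3 where "edge_coords c3 r3" "P3 = edge_point c3 r3"
    using realization_edge_point_obtain[OF P1234(3)] .
  moreover obtain c4 r4 where "edge_coords c4 r4" "P4 = edge_point c4 r4"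
    using realization_edge_point_obtain[OF P1234(4)] .
  ultimately show "tdist E P1 P2 + tdist E P3 P4
      \<le> max (tdist E P1 P3 + tdist E P2 P4) (tdist E P1 P4 + tdist E P2 P3)"
    using coord_dist_four_point[of c1 r1 c2 r2 c3 r3 c4 r4] by (simp add: tdist_edge_point)
qed

end

sublocale tree_graph \<subseteq> zero_hyperbolic "realization E" "tdist E"
  using rooted_tree.zero_hyperbolic_realization[of E] tree_graph_axioms
  by (simp add: rooted_tree_def)

context tree_graph
begin

lemma tdist_vertex_points: "tdist E (vertex_point u) (vertex_point v) = real (d u v)"
proof -
  interpret R: rooted_tree E u by unfold_locales
  show ?thesis by (rule R.tdist_vertex_points)
qed

lemma supp_realization:
  assumes "P \<in> realization E"
  shows "supp P \<noteq> {}" "finite (supp P)" "card (supp P) \<le> 2"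
proof -
  interpret R: rooted_tree E undefined by unfold_locales
  obtain c r where "R.edge_coords c r" "P = R.edge_point c r"
    using R.realization_edge_point_obtain[OF assms] .
  then have "c \<in> supp P" "supp P \<subseteq> {c, R.parent c}"
    using R.base_in_supp R.supp_edge_point_subset by auto
  moreover have "card {c, R.parent c} \<le> 2" by (cases "c = R.parent c") auto
  ultimately show "supp P \<noteq> {}" "finite (supp P)" "card (supp P) \<le> 2"
    using card_mono[of "{c, R.parent c}" "supp P"] finite_subset by fastforce+
qed

lemma tdist_supp_vertex:
  assumes "P \<in> realization E" "x \<in> supp P"
  shows "tdist E P (vertex_point x) \<le> 1"
proof -
  interpret R: rooted_tree E undefined by unfold_locales
  obtain c r where cr: "R.edge_coords c r" "P = R.edge_point c r"
    using R.realization_edge_point_obtain[OF assms(1)] .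
  have "tdist E P (vertex_point x) = 1 - P x"
    using R.tdist_edge_point[OF cr(1) R.edge_coords_0[of x]] R.edge_point_supp_value[OF cr(1)]
      assms(2) cr by simp
  moreover have "0 \<le> P x" using cr unfolding R.edge_coords_def R.edge_point_def by auto
  ultimately show ?thesis by simp
qed

lemma tdist_le_supp_dist:
  assumes "P \<in> realization E" "Q \<in> realization E" "x \<in> supp P" "y \<in> supp Q"
  shows "tdist E P Q \<le> real (d x y) + 2"
proof -
  have "tdist E P Q \<le> tdist E P (vertex_point x) + tdist E (vertex_point x) (vertex_point y)
      + tdist E (vertex_point y) Q"
    using D_triangle[of P Q "vertex_point x"] D_triangle[of "vertex_point x" Q "vertex_point y"] assms
    by simp
  moreover have "tdist E (vertex_point y) Q = tdist E Q (vertex_point y)" using D_sym assms by simp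
  ultimately show ?thesis
    using tdist_supp_vertex[OF assms(1,3)] tdist_supp_vertex[OF assms(2,4)] tdist_vertex_points
      by simp
qed

lemma vertex_between:
  assumes "X \<in> realization E"
  shows "\<exists>p. between (vertex_point w) (vertex_point p) X \<and> tdist E (vertex_point p) X < 1"
proof -
  interpret R: rooted_tree E w by unfold_locales
  obtain c r where cr: "R.edge_coords c r" "X = R.edge_point c r"
    using R.realization_edge_point_obtain[OF assms] .
  show ?thesis
  proof (cases "r = 0")
    case True
    then show ?thesis using cr D_self[OF assms] unfolding between_def by (intro exI[of _ c]) simp
  next
    case False
    then have cw: "c \<noteq> w" and r: "0 < r" "r < 1" using cr unfolding R.edge_coords_def by auto
    have hc: "R.height c = Suc (R.height (R.parent c))" using R.parent(2)[OF cw] by simp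
    have "tdist E (vertex_point w) (vertex_point (R.parent c)) = real (R.height (R.parent c))"
      using tdist_vertex_points R.height_def by simp
    moreover have "tdist E (vertex_point (R.parent c)) X = 1 - r"
      using R.tdist_edge_point[OF R.edge_coords_0 cr(1)] R.coord_dist_parent[OF cr(1) False]
        R.coord_dist_sym cr by simp
    moreover have "tdist E (vertex_point w) X = real (R.height c) - r"
      using R.tdist_edge_point[OF R.edge_coords_0[of w] cr(1)] cr r hc R.meet_height(1)[of w c]
      unfolding R.coord_dist_def R.meet_level_def R.point_height_def by (simp add: min_def)
    ultimately show ?thesis using hc r unfolding between_def by (intro exI[of _ "R.parent c"]) simp
  qed
qed

lemma geodesic_line_meets_vertex:
  assumes L: "geodesic_line \<gamma>"
  shows "\<exists>s u. \<gamma> s = vertex_point u"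
proof -
  define w where "w = vertex_point (undefined :: 'a)"
  have wR: "w \<in> realization E" unfolding w_def by simp
  obtain s0 where s0: "\<And>s. tdist E w (\<gamma> s) = tdist E w (\<gamma> s0) + \<bar>s - s0\<bar>"
    using line_projection[OF L wR] by blast
  define X where "X = \<gamma> (s0 + 2)"
  have XR: "X \<in> realization E" unfolding X_def using geodesic_lineD[OF L] by blast
  obtain p where p: "between w (vertex_point p) X" "tdist E (vertex_point p) X < 1"
    using vertex_between[OF XR] unfolding w_def by blast
  define a where "a = tdist E (vertex_point p) X"
  define Y where "Y = \<gamma> (s0 + 2 - a)"
  have a0: "0 \<le> a" unfolding a_def using D_nonneg XR by simp
  have YR: "Y \<in> realization E" unfolding Y_def using geodesic_lineD[OF L] by blast
  have DX: "tdist E w X = tdist E w (\<gamma> s0) + 2" unfolding X_def using s0[of "s0 + 2"] by simp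
  have DY: "tdist E w Y = tdist E w (\<gamma> s0) + 2 - a"
    unfolding Y_def using s0[of "s0 + 2 - a"] p(2) a_def by simp
  have "tdist E Y X = a" unfolding X_def Y_def using geodesic_lineD(2)[OF L] a0 by simp
  then have "between w Y X" unfolding between_def using DX DY by simp
  moreover have "tdist E w (vertex_point p) = tdist E w Y" using p(1) DX DY a_def
    unfolding between_def by simp
  ultimately have "vertex_point p = Y" using between_unique[OF wR XR _ YR p(1)] by simp
  then show ?thesis unfolding Y_def by metis
qed

end

section \<open>Group actions on graphs\<close>

context
  fixes \<sigma> \<tau> :: "'a \<Rightarrow> 'a"
  assumes inv: "\<And>x. \<tau> (\<sigma> x) = x" "\<And>x. \<sigma> (\<tau> x) = x"
begin

lemma supp_comp_inverse: "supp (\<lambda>w. R (\<tau> w)) = \<sigma> ` supp R"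
proof (intro equalityI subsetI)
  fix w assume "w \<in> supp (\<lambda>w. R (\<tau> w))"
  then have "\<tau> w \<in> supp R" by (simp add: supp_def)
  then show "w \<in> \<sigma> ` supp R" using inv(2)[of w] by (metis imageI)
next
  fix w assume "w \<in> \<sigma> ` supp R"
  then obtain x where "x \<in> supp R" "w = \<sigma> x" by blast
  then show "w \<in> supp (\<lambda>w. R (\<tau> w))" using inv(1) by (simp add: supp_def)
qed

lemma image_subset_doubleton_iff: "\<sigma> ` A \<subseteq> {u, v} \<longleftrightarrow> A \<subseteq> {\<tau> u, \<tau> v}"
proof
  assume A: "\<sigma> ` A \<subseteq> {u, v}"
  show "A \<subseteq> {\<tau> u, \<tau> v}"
  proof
    fix x assume "x \<in> A"
    then have "\<tau> (\<sigma> x) \<in> {\<tau> u, \<tau> v}" using A by blast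
    then show "x \<in> {\<tau> u, \<tau> v}" using inv(1) by simp
  qed
next
  assume "A \<subseteq> {\<tau> u, \<tau> v}"
  then have "\<sigma> ` A \<subseteq> {\<sigma> (\<tau> u), \<sigma> (\<tau> v)}" by blast
  then show "\<sigma> ` A \<subseteq> {u, v}" using inv(2) by simp
qed

lemma common_edge_image_iff:
  assumes edge: "\<And>u v. E (\<sigma> u) (\<sigma> v) \<longleftrightarrow> E u v"
  shows "(\<exists>u v. (u = v \<or> E u v) \<and> \<sigma> ` A \<subseteq> {u, v} \<and> \<sigma> ` B \<subseteq> {u, v}) \<longleftrightarrow>
    (\<exists>u v. (u = v \<or> E u v) \<and> A \<subseteq> {u, v} \<and> B \<subseteq> {u, v})"
proof
  assume "\<exists>u v. (u = v \<or> E u v) \<and> \<sigma> ` A \<subseteq> {u, v} \<and> \<sigma> ` B \<subseteq> {u, v}"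
  then obtain u v where "u = v \<or> E u v" "A \<subseteq> {\<tau> u, \<tau> v}" "B \<subseteq> {\<tau> u, \<tau> v}"
    unfolding image_subset_doubleton_iff by blast
  moreover have "\<tau> u = \<tau> v \<or> E (\<tau> u) (\<tau> v)" using \<open>u = v \<or> E u v\<close> edge[of "\<tau> u" "\<tau> v"] inv by auto
  ultimately show "\<exists>u v. (u = v \<or> E u v) \<and> A \<subseteq> {u, v} \<and> B \<subseteq> {u, v}" by blast
next
  assume "\<exists>u v. (u = v \<or> E u v) \<and> A \<subseteq> {u, v} \<and> B \<subseteq> {u, v}"
  then obtain u v where "u = v \<or> E u v" "A \<subseteq> {u, v}" "B \<subseteq> {u, v}" by blast
  then show "\<exists>u v. (u = v \<or> E u v) \<and> \<sigma> ` A \<subseteq> {u, v} \<and> \<sigma> ` B \<subseteq> {u, v}"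
    using edge by (intro exI[of _ "\<sigma> u"] exI[of _ "\<sigma> v"]) auto
qed

lemma tdist_graph_automorphism:
  assumes edge: "\<And>u v. E (\<sigma> u) (\<sigma> v) \<longleftrightarrow> E u v"
    and dist: "\<And>u v. gdist E (\<sigma> u) (\<sigma> v) = gdist E u v"
  shows "tdist E (\<lambda>w. P (\<tau> w)) (\<lambda>w. Q (\<tau> w)) = tdist E P Q"
proof -
  have "inj_on \<sigma> (supp P \<union> supp Q)" by (rule inj_on_inverseI[where g = \<tau>]) (rule inv(1))
  then have "(\<Sum>w\<in>\<sigma> ` supp P \<union> \<sigma> ` supp Q. \<bar>P (\<tau> w) - Q (\<tau> w)\<bar>) = (\<Sum>w\<in>supp P \<union> supp Q. \<bar>P w - Q w\<bar>)"
    by (simp add: image_Un[symmetric] sum.reindex inv(1))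
  moreover have "{(1 - P (\<tau> a)) + real (gdist E a b) + (1 - Q (\<tau> b)) | a b. a \<in> \<sigma> ` supp P \<and> b \<in> \<sigma> ` supp Q}
      = {(1 - P a) + real (gdist E a b) + (1 - Q b) | a b. a \<in> supp P \<and> b \<in> supp Q}"
  proof (rule equalityI; rule subsetI)
    fix y assume "y \<in> {(1 - P (\<tau> a)) + real (gdist E a b) + (1 - Q (\<tau> b)) | a b. a \<in> \<sigma> ` supp P \<and> b \<in> \<sigma> ` supp Q}"
    then obtain a b where "a \<in> supp P" "b \<in> supp Q"
      "y = (1 - P (\<tau> (\<sigma> a))) + real (gdist E (\<sigma> a) (\<sigma> b)) + (1 - Q (\<tau> (\<sigma> b)))"
      by blast
    then show "y \<in> {(1 - P a) + real (gdist E a b) + (1 - Q b) | a b. a \<in> supp P \<and> b \<in> supp Q}"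
      using dist inv(1) by auto
  next
    fix y assume "y \<in> {(1 - P a) + real (gdist E a b) + (1 - Q b) | a b. a \<in> supp P \<and> b \<in> supp Q}"
    then obtain a b where ab: "a \<in> supp P" "b \<in> supp Q" "y = (1 - P a) + real (gdist E a b) + (1 - Q b)"
      by blast
    then have "y = (1 - P (\<tau> (\<sigma> a))) + real (gdist E (\<sigma> a) (\<sigma> b)) + (1 - Q (\<tau> (\<sigma> b)))"
      using inv(1) dist by simp
    then show "y \<in> {(1 - P (\<tau> a)) + real (gdist E a b) + (1 - Q (\<tau> b)) | a b. a \<in> \<sigma> ` supp P \<and> b \<in> \<sigma> ` supp Q}"
      using ab by blast
  qed
  ultimately show ?thesis
    unfolding tdist_def supp_comp_inverse common_edge_image_iff[where E = E, OF edge]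
      by (simp only:)
qed

end

locale graph_action = group G for G :: "('g, 'm) monoid_scheme" (structure) +
  fixes \<phi> :: "'g \<Rightarrow> 'v \<Rightarrow> 'v" and E :: "'v \<Rightarrow> 'v \<Rightarrow> bool"
  assumes graph_aut: "graph_aut_action G \<phi> E"
begin

lemma act_group_action: "group_action G UNIV \<phi>"
  using graph_aut unfolding graph_aut_action_def by blast

lemma act_edge_iff: "g \<in> carrier G \<Longrightarrow> E (\<phi> g u) (\<phi> g v) \<longleftrightarrow> E u v"
  using graph_aut unfolding graph_aut_action_def by blast

lemma act_mult: "g \<in> carrier G \<Longrightarrow> h \<in> carrier G \<Longrightarrow> \<phi> (g \<otimes> h) x = \<phi> g (\<phi> h x)"
  using group_action.composition_rule[OF act_group_action, of x g h] by simp

lemma act_one [simp]: "\<phi> \<one> x = x"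
proof -
  have "(\<lambda>x \<in> UNIV. x) = \<phi> \<one>" by (rule group_action.id_eq_one[OF act_group_action])
  then show ?thesis by (metis UNIV_I restrict_apply')
qed

lemma act_inv_act [simp]: "g \<in> carrier G \<Longrightarrow> \<phi> (inv g) (\<phi> g x) = x"
  using act_mult[of "inv g" g x] by simp

lemma act_act_inv [simp]: "g \<in> carrier G \<Longrightarrow> \<phi> g (\<phi> (inv g) x) = x"
  using act_mult[of g "inv g" x] by simp

lemma gdist_act:
  assumes "connected_graph E" "g \<in> carrier G"
  shows "gdist E (\<phi> g x) (\<phi> g y) = gdist E x y"
proof (rule antisym)
  show "gdist E (\<phi> g x) (\<phi> g y) \<le> gdist E x y"
    using connected_graph.d_hom_le[OF assms(1), of "\<phi> g"] act_edge_iff[OF assms(2)] by blast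
  show "gdist E x y \<le> gdist E (\<phi> g x) (\<phi> g y)"
    using connected_graph.d_hom_le[OF assms(1), of "\<phi> (inv g)" "\<phi> g x" "\<phi> g y"]
      act_edge_iff[of "inv g"] assms(2) by simp
qed

lemma gdist_act_int_pow_le:
  assumes X: "connected_graph E" and g: "g \<in> carrier G"
  shows "real (gdist E x (\<phi> (g [^] (n::int)) x)) \<le> \<bar>real_of_int n\<bar> * real (gdist E x (\<phi> g x))"
proof (induction n rule: int_induct[where k = 0])
  case (step1 n)
  have "g [^] (n + 1) = g [^] n \<otimes> g" using g by (simp add: int_pow_mult)
  then have "gdist E x (\<phi> (g [^] (n + 1)) x)
      \<le> gdist E x (\<phi> (g [^] n) x) + gdist E (\<phi> (g [^] n) x) (\<phi> (g [^] n) (\<phi> g x))"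
    using connected_graph.d_triangle[OF X] act_mult g by simp
  then show ?case using step1 gdist_act[OF X] g by (simp add: distrib_right)
next
  case (step2 n)
  have "g [^] (n - 1) = g [^] n \<otimes> inv g" using g by (simp add: int_pow_diff)
  then have "gdist E x (\<phi> (g [^] (n - 1)) x)
      \<le> gdist E x (\<phi> (g [^] n) x) + gdist E (\<phi> (g [^] n) x) (\<phi> (g [^] n) (\<phi> (inv g) x))"
    using connected_graph.d_triangle[OF X] act_mult g by simp
  moreover have "gdist E x (\<phi> (inv g) x) = gdist E x (\<phi> g x)"
    using gdist_act[OF X g, of x "\<phi> (inv g) x"] connected_graph.d_sym[OF X] g by simp
  ultimately show ?case using step2 gdist_act[OF X] g by (simp add: algebra_simps)
qed (simp add: connected_graph.d_refl[OF X])

lemma gdist_int_pow_orbit: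
  assumes X: "connected_graph E" and g: "g \<in> carrier G"
  shows "gdist E (\<phi> (g [^] (i::int)) x) (\<phi> (g [^] (j::int)) x) = gdist E x (\<phi> (g [^] (j - i)) x)"
proof -
  have "inv (g [^] i) \<otimes> g [^] j = g [^] (j - i)"
    using g int_pow_mult[OF g, of "- i" j] by (simp add: int_pow_neg)
  then show ?thesis
    using gdist_act[OF X, of "inv (g [^] i)" "\<phi> (g [^] i) x" "\<phi> (g [^] j) x"]
      act_mult[of "inv (g [^] i)" "g [^] j" x] g by simp
qed

abbreviation act_point where "act_point \<equiv> act_pt G \<phi>"

lemma act_point_mult:
  "g \<in> carrier G \<Longrightarrow> h \<in> carrier G \<Longrightarrow> act_point (g \<otimes> h) P = act_point g (act_point h P)"
  unfolding act_pt_def by (simp add: inv_mult_group act_mult)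

lemma act_point_one [simp]: "act_point \<one> P = P"
  unfolding act_pt_def by simp

lemma act_point_inv_act [simp]: "g \<in> carrier G \<Longrightarrow> act_point (inv g) (act_point g P) = P"
  using act_point_mult[of "inv g" g P] by simp

lemma act_inv_eq_iff: "g \<in> carrier G \<Longrightarrow> \<phi> (inv g) w = a \<longleftrightarrow> w = \<phi> g a"
  by (metis act_inv_act act_act_inv)

lemma act_point_vertex: "g \<in> carrier G \<Longrightarrow> act_point g (vertex_point u) = vertex_point (\<phi> g u)"
  unfolding act_pt_def vertex_point_def by (rule ext) (simp add: act_inv_eq_iff)

lemma act_point_in_realization:
  assumes g: "g \<in> carrier G" and P: "P \<in> realization E"
  shows "act_point g P \<in> realization E"
proof -
  consider (v) u where "P = vertex_point u"
    | (e) a b t where "E a b" "0 < t" "t < 1" "P = (\<lambda>w. if w = a then 1 - t else if w = b then t else 0)"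
    using P unfolding realization_def vertex_point_def by blast
  then show ?thesis
  proof cases
    case v
    then show ?thesis using act_point_vertex[OF g] by simp
  next
    case e
    have "act_point g P = (\<lambda>w. if w = \<phi> g a then 1 - t else if w = \<phi> g b then t else 0)"
      unfolding act_pt_def e(4) by (rule ext) (simp add: act_inv_eq_iff[OF g])
    moreover have "E (\<phi> g a) (\<phi> g b)" using act_edge_iff[OF g] e(1) by simp
    ultimately show ?thesis unfolding realization_def using e(2,3) by blast
  qed
qed

lemma tdist_act_point:
  assumes "connected_graph E" "g \<in> carrier G"
  shows "tdist E (act_point g P) (act_point g Q) = tdist E P Q"
  unfolding act_pt_def
  by (rule tdist_graph_automorphism[where \<sigma> = "\<phi> g"]) (use assms act_edge_iff gdist_act in auto)

lemma act_point_int_pow_translation: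
  assumes g: "g \<in> carrier G" and T: "\<And>s. act_point g (\<gamma> s) = \<gamma> (s + \<tau>)"
  shows "act_point (g [^] (n::int)) (\<gamma> s) = \<gamma> (s + of_int n * \<tau>)"
proof (induction n arbitrary: s rule: int_induct[where k = 0])
  case (step1 n)
  have "g [^] (n + 1) = g [^] n \<otimes> g" using g by (simp add: int_pow_mult)
  then show ?case using step1 T g by (simp add: act_point_mult algebra_simps)
next
  case (step2 n)
  have "act_point (inv g) (\<gamma> s) = \<gamma> (s - \<tau>)" for s
    using T[of "s - \<tau>"] act_point_inv_act[OF g, of "\<gamma> (s - \<tau>)"] by simp
  moreover have "g [^] (n - 1) = g [^] n \<otimes> inv g" using g by (simp add: int_pow_diff)
  ultimately show ?case using step2 g by (simp add: act_point_mult algebra_simps)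
qed simp

end

section \<open>Acylindrical actions on trees\<close>

locale acylindrical_tree_action = graph_action G \<phi> ET
  for G :: "('g, 'm) monoid_scheme" (structure) and \<phi> :: "'g \<Rightarrow> 'b \<Rightarrow> 'b" and ET +
  fixes \<kappa> :: nat
  assumes torsion_free: "torsion_free G" and tree: "simplicial_tree ET"
    and acylindrical: "acylindrical G \<phi> ET \<kappa>"
begin

sublocale T: tree_graph ET
  using tree simplicial_tree_iff_tree_graph by blast

lemma square_fixes_supp:
  assumes k: "k \<in> carrier G" and R: "R \<in> realization ET" and fixed: "act_point k R = R"
    and x: "x \<in> supp R"
  shows "\<phi> (k \<otimes> k) x = x"
proof -
  define \<sigma> where "\<sigma> = \<phi> (inv k)"
  have ss: "\<sigma> w \<in> supp R" if "w \<in> supp R" for w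
    using that fun_cong[OF fixed, of w] unfolding act_pt_def \<sigma>_def supp_def by simp
  have inj: "\<sigma> a = \<sigma> b \<Longrightarrow> a = b" for a b unfolding \<sigma>_def by (metis act_act_inv k)
  have "\<sigma> (\<sigma> x) = x"
  proof (rule ccontr)
    assume "\<sigma> (\<sigma> x) \<noteq> x"
    then have "\<sigma> x \<noteq> x" "\<sigma> (\<sigma> x) \<noteq> \<sigma> x" using inj by auto
    then have "card {x, \<sigma> x, \<sigma> (\<sigma> x)} = 3" using \<open>\<sigma> (\<sigma> x) \<noteq> x\<close> by auto
    moreover have "card {x, \<sigma> x, \<sigma> (\<sigma> x)} \<le> card (supp R)"
      using T.supp_realization[OF R] ss x by (intro card_mono) auto
    ultimately show False using T.supp_realization(3)[OF R] by simp
  qed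
  then show ?thesis unfolding \<sigma>_def using k act_mult by (metis act_act_inv)
qed

lemma fixes_geodesic_walk:
  assumes h: "h \<in> carrier G" and fx: "\<phi> h x = x" and fy: "\<phi> h y = y"
    and xs: "\<forall>i \<le> T.d x y. T.d x (xs ! i) = i \<and> T.d (xs ! i) y = T.d x y - i"
    and i: "i \<le> T.d x y"
  shows "\<phi> h (xs ! i) = xs ! i"
proof -
  define z where "z = xs ! i"
  have "T.d x (\<phi> h z) = T.d x z" "T.d (\<phi> h z) y = T.d z y"
    using gdist_act[OF T.connected_graph_axioms h, of x z] gdist_act[OF T.connected_graph_axioms h, of z y]
      fx fy by simp_all
  then have "T.between (vertex_point x) (vertex_point (\<phi> h z)) (vertex_point y)"
    "T.between (vertex_point x) (vertex_point z) (vertex_point y)"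
    "tdist ET (vertex_point x) (vertex_point z) = tdist ET (vertex_point x) (vertex_point (\<phi> h z))"
    using xs i unfolding T.between_def T.tdist_vertex_points z_def by auto
  then show ?thesis
    using T.between_unique[of "vertex_point x" "vertex_point y"] vertex_point_inj z_def by force
qed

text \<open>\<open>k\<close> may flip the edge containing a point, but its square fixes a vertex near each point,
  hence the geodesic between them, which is longer than \<open>\<kappa>\<close>; acylindricity and torsion-freeness
  then make \<open>k\<close> trivial.\<close>

lemma fixes_far_points_trivial:
  assumes k: "k \<in> carrier G" and P: "P \<in> realization ET" and Q: "Q \<in> realization ET"
    and fP: "act_point k P = P" and fQ: "act_point k Q = Q"
    and far: "real \<kappa> + 3 \<le> tdist ET P Q"
  shows "k = \<one>"
proof -
  obtain x y where x: "x \<in> supp P" and y: "y \<in> supp Q"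
    using T.supp_realization(1) P Q by blast
  have k2: "k \<otimes> k \<in> carrier G" using k by simp
  have "\<kappa> + 1 \<le> T.d x y" using T.tdist_le_supp_dist[OF P Q x y] far by simp
  obtain xs where xs: "is_walk ET xs" "length xs = Suc (T.d x y)"
    "\<forall>i \<le> T.d x y. T.d x (xs ! i) = i \<and> T.d (xs ! i) y = T.d x y - i"
    using T.geodesic_walk by blast
  have "\<forall>v\<in>set xs. \<phi> (k \<otimes> k) v = v"
    using fixes_geodesic_walk[OF k2 square_fixes_supp[OF k P fP x] square_fixes_supp[OF k Q fQ y] xs(3)]
      xs(2) by (metis in_set_conv_nth less_Suc_eq_le)
  moreover have "distinct xs" unfolding distinct_conv_nth using xs(2,3) by (metis less_Suc_eq_le)
  moreover have "\<kappa> + 2 \<le> length xs" using xs(2) \<open>\<kappa> + 1 \<le> T.d x y\<close> by simp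
  ultimately have "k \<otimes> k = \<one>" using acylindrical xs(1) k2 unfolding acylindrical_def by blast
  then have "k [^] (2::nat) = \<one>" using k by (simp add: numeral_2_eq_2)
  then show ?thesis using torsion_free k unfolding torsion_free_def by force
qed

lemma axis_geodesic_line: "is_axis G \<phi> ET g A \<Longrightarrow> \<exists>\<gamma>. T.geodesic_line \<gamma> \<and> A = range \<gamma>"
  unfolding is_axis_def bi_infinite_geodesic_def T.geodesic_line_def by blast

lemma loxodromic_no_fixed_point:
  assumes g: "g \<in> carrier G" and lox: "loxodromic G \<phi> ET g" and P: "P \<in> realization ET"
  shows "act_point g P \<noteq> P"
proof
  assume fixed: "act_point g P = P"
  have "bdd_below ((\<lambda>Q. tdist ET Q (act_point g Q)) ` realization ET)"
    by (rule bdd_belowI[of _ 0]) (use T.D_nonneg act_point_in_realization[OF g] in auto)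
  then have "(INF Q\<in>realization ET. tdist ET Q (act_point g Q)) \<le> tdist ET P (act_point g P)"
    using P by (rule cINF_lower)
  also have "\<dots> = 0" using fixed T.D_self[OF P] by simp
  finally show False using lox unfolding loxodromic_def by simp
qed

lemma axis_translation:
  assumes g: "g \<in> carrier G" and lox: "loxodromic G \<phi> ET g"
    and L: "T.geodesic_line \<gamma>" and inv: "act_point g ` range \<gamma> = range \<gamma>"
  shows "\<exists>n::int. n \<noteq> 0 \<and> (\<forall>s. act_point g (\<gamma> s) = \<gamma> (s + of_int n))"
proof -
  obtain \<tau> where \<tau>: "\<tau> \<noteq> 0" "\<And>s. act_point g (\<gamma> s) = \<gamma> (s + \<tau>)"
    using T.fixed_point_free_line_isometry[OF L tdist_act_point[OF T.connected_graph_axioms g] inv]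
      loxodromic_no_fixed_point[OF g lox] by blast
  obtain s u where su: "\<gamma> s = vertex_point u" using T.geodesic_line_meets_vertex[OF L] by blast
  have "\<gamma> (s + \<tau>) = vertex_point (\<phi> g u)" using \<tau>(2)[of s] su act_point_vertex[OF g] by simp
  then have "\<bar>\<tau>\<bar> = real (T.d u (\<phi> g u))"
    using T.geodesic_lineD(2)[OF L, of s "s + \<tau>"] su T.tdist_vertex_points by simp
  then have "\<tau> \<in> \<int>" by (metis Ints_minus Ints_of_nat abs_if minus_minus)
  then obtain n where "\<tau> = of_int n" by (auto elim: Ints_cases)
  then show ?thesis using \<tau> by auto
qed

lemma axis_unique:
  assumes g: "g \<in> carrier G" and lox: "loxodromic G \<phi> ET g"
    and A1: "is_axis G \<phi> ET g A1" and A2: "is_axis G \<phi> ET g A2"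
  shows "A1 = A2"
proof -
  have iso: "\<And>P Q. P \<in> realization ET \<Longrightarrow> Q \<in> realization ET \<Longrightarrow>
      tdist ET (act_point g P) (act_point g Q) = tdist ET P Q"
    using tdist_act_point[OF T.connected_graph_axioms g] by blast
  obtain \<gamma> where \<gamma>: "T.geodesic_line \<gamma>" "A1 = range \<gamma>" using axis_geodesic_line[OF A1] by blast
  obtain \<eta> where \<eta>: "T.geodesic_line \<eta>" "A2 = range \<eta>" using axis_geodesic_line[OF A2] by blast
  have "act_point g ` range \<gamma> = range \<gamma>" "act_point g ` range \<eta> = range \<eta>"
    using A1 A2 \<gamma>(2) \<eta>(2) unfolding is_axis_def by simp_all
  then obtain m n :: int where m: "m \<noteq> 0" "\<And>s. act_point g (\<gamma> s) = \<gamma> (s + of_int m)"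
    and n: "n \<noteq> 0" "\<And>s. act_point g (\<eta> s) = \<eta> (s + of_int n)"
    using axis_translation[OF g lox \<gamma>(1)] axis_translation[OF g lox \<eta>(1)] by metis
  have "range \<eta> \<subseteq> range \<gamma>"
    by (rule T.translation_axis_unique[OF \<gamma>(1) \<eta>(1) act_point_in_realization[OF g] iso m(2) _ n(2)])
      (use m(1) n(1) in simp_all)
  moreover have "range \<gamma> \<subseteq> range \<eta>"
    by (rule T.translation_axis_unique[OF \<eta>(1) \<gamma>(1) act_point_in_realization[OF g] iso n(2) _ m(2)])
      (use m(1) n(1) in simp_all)
  ultimately show ?thesis using \<gamma>(2) \<eta>(2) by blast
qed

lemma axis_conj:
  assumes g: "g \<in> carrier G" and k: "k \<in> carrier G" and A: "is_axis G \<phi> ET g A"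
  shows "is_axis G \<phi> ET (k \<otimes> g \<otimes> inv k) (act_point k ` A)"
proof -
  obtain \<gamma> where \<gamma>: "T.geodesic_line \<gamma>" "A = range \<gamma>" using axis_geodesic_line[OF A] by blast
  have "T.geodesic_line (\<lambda>s. act_point k (\<gamma> s))"
    using act_point_in_realization[OF k] tdist_act_point[OF T.connected_graph_axioms k] T.geodesic_lineD[OF \<gamma>(1)]
    unfolding T.geodesic_line_def by simp
  moreover have "act_point k ` A = range (\<lambda>s. act_point k (\<gamma> s))" unfolding \<gamma>(2) by auto
  ultimately have "bi_infinite_geodesic ET (act_point k ` A)"
    unfolding bi_infinite_geodesic_def T.geodesic_line_def
    by (intro exI[of _ "\<lambda>s. act_point k (\<gamma> s)"]) simp
  moreover have "act_point (k \<otimes> g \<otimes> inv k) (act_point k P) = act_point k (act_point g P)" for P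
    using g k by (simp add: act_point_mult)
  then have "act_point (k \<otimes> g \<otimes> inv k) ` act_point k ` A = act_point k ` act_point g ` A"
    by (simp add: image_image)
  ultimately show ?thesis using A unfolding is_axis_def by simp
qed

definition translation_length :: "'g \<Rightarrow> real" where
  "translation_length g = (INF P\<in>realization ET. tdist ET P (act_point g P))"

lemma translation_length_nonneg:
  assumes g: "g \<in> carrier G"
  shows "0 \<le> translation_length g"
  unfolding translation_length_def
proof (rule cINF_greatest)
  show "realization ET \<noteq> {}" using vertex_point_in_realization[of _ ET] by blast
  show "0 \<le> tdist ET P (act_point g P)" if "P \<in> realization ET" for P
    using T.D_nonneg[OF that act_point_in_realization[OF g that]] .
qed

lemma translation_length_axis:
  assumes g: "g \<in> carrier G" and L: "T.geodesic_line \<gamma>"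
    and tr: "\<And>s. act_point g (\<gamma> s) = \<gamma> (s + \<tau>)" and "\<tau> \<noteq> 0"
  shows "translation_length g = \<bar>\<tau>\<bar>"
  unfolding translation_length_def
proof (rule cInf_eq_minimum)
  have "tdist ET (\<gamma> 0) (act_point g (\<gamma> 0)) \<in> (\<lambda>P. tdist ET P (act_point g P)) ` realization ET"
    using T.geodesic_lineD(1)[OF L] by (rule imageI)
  then show "\<bar>\<tau>\<bar> \<in> (\<lambda>P. tdist ET P (act_point g P)) ` realization ET"
    using tr T.geodesic_lineD(2)[OF L] by simp
next
  fix x assume "x \<in> (\<lambda>P. tdist ET P (act_point g P)) ` realization ET"
  then obtain P where P: "P \<in> realization ET" "x = tdist ET P (act_point g P)" by blast
  obtain s0 where "2 * tdist ET P (\<gamma> s0) + \<bar>\<tau>\<bar> \<le> tdist ET P (act_point g P)"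
    using T.translation_displacement[OF L act_point_in_realization[OF g]
        tdist_act_point[OF T.connected_graph_axioms g] tr \<open>\<tau> \<noteq> 0\<close> P(1)] by blast
  moreover have "0 \<le> tdist ET P (\<gamma> s0)" using T.D_nonneg[OF P(1) T.geodesic_lineD(1)[OF L]] .
  ultimately show "\<bar>\<tau>\<bar> \<le> x" using P(2) by linarith
qed

lemma translation_length_conj:
  assumes k: "k \<in> carrier G" and h: "h \<in> carrier G"
  shows "translation_length (k \<otimes> h \<otimes> inv k) = translation_length h"
proof -
  have eq: "tdist ET P (act_point (k \<otimes> h \<otimes> inv k) P)
      = tdist ET (act_point (inv k) P) (act_point h (act_point (inv k) P))" for P
    using tdist_act_point[OF T.connected_graph_axioms k, of "act_point (inv k) P"]
      act_point_inv_act[of "inv k" P] k h by (simp add: act_point_mult)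
  have surj: "act_point (inv k) ` realization ET = realization ET"
  proof
    show "act_point (inv k) ` realization ET \<subseteq> realization ET" using act_point_in_realization k
      by auto
    show "realization ET \<subseteq> act_point (inv k) ` realization ET"
    proof
      fix P assume "P \<in> realization ET"
      then show "P \<in> act_point (inv k) ` realization ET"
        using act_point_inv_act[OF k, of P] act_point_in_realization[OF k] by (metis image_eqI)
    qed
  qed
  have "translation_length (k \<otimes> h \<otimes> inv k)
      = (INF P\<in>realization ET. tdist ET (act_point (inv k) P) (act_point h (act_point (inv k) P)))"
    unfolding translation_length_def eq ..
  also have "\<dots> = (INF Q\<in>act_point (inv k) ` realization ET. tdist ET Q (act_point h Q))"
    by (simp add: image_image)
  finally show ?thesis unfolding surj translation_length_def .
qed

lemma int_pow_translation_nontrivial: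
  assumes g: "g \<in> carrier G" and L: "T.geodesic_line \<gamma>"
    and tr: "\<And>s. act_point g (\<gamma> s) = \<gamma> (s + \<tau>)" and "\<tau> \<noteq> 0" "n \<noteq> 0"
  shows "g [^] (n::int) \<noteq> \<one>"
proof
  assume "g [^] n = \<one>"
  then have "\<gamma> 0 = \<gamma> (of_int n * \<tau>)"
    using act_point_int_pow_translation[where \<gamma> = \<gamma> and \<tau> = \<tau>, OF g tr, of n 0] by simp
  then show False
    using T.geodesic_lineD(2)[OF L, of 0 "of_int n * \<tau>"] T.D_self[OF T.geodesic_lineD(1)[OF L]]
    \<open>\<tau> \<noteq> 0\<close> \<open>n \<noteq> 0\<close> by simp
qed

text \<open>Along a common stretch of the axes (run in directions differing by the sign \<open>e\<close>),
  \<open>h\<^sup>-\<^sup>e\<^sup>m\<close> translates by \<open>-m n\<close> and \<open>g\<^sup>n\<close> translates back by \<open>m n\<close>.\<close>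

lemma overlap_fixed_pointwise:
  fixes a b c s :: real
  assumes g: "g \<in> carrier G" and h: "h \<in> carrier G"
    and tg: "\<And>s. act_point g (\<gamma> s) = \<gamma> (s + of_int m)"
    and th: "\<And>s. act_point h (\<eta> s) = \<eta> (s + of_int n)"
    and e: "e = 1 \<or> e = -1" and ov: "\<And>s. a < s \<Longrightarrow> s < b \<Longrightarrow> \<gamma> s = \<eta> (c + of_int e * s)"
    and s: "a + \<bar>of_int (m * n)\<bar> < s" "s < b - \<bar>of_int (m * n)\<bar>"
  shows "act_point (g [^] n \<otimes> h [^] (- (e * m))) (\<gamma> s) = \<gamma> s"
proof -
  have "0 \<le> \<bar>of_int (m * n) :: real\<bar>" "of_int (m * n) \<le> \<bar>of_int (m * n) :: real\<bar>"
    "- of_int (m * n) \<le> \<bar>of_int (m * n) :: real\<bar>" by linarith+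
  then have s1: "a < s" "s < b" and s2: "a < s - of_int (m * n)" "s - of_int (m * n) < b"
    using s by linarith+
  have "act_point (h [^] (- (e * m))) (\<gamma> s) = \<eta> (c + of_int e * s + of_int (- (e * m)) * of_int n)"
    using ov[OF s1] act_point_int_pow_translation[where \<gamma> = \<eta>, OF h th] by simp
  also have "\<dots> = \<gamma> (s - of_int (m * n))"
    using ov[OF s2] e by (auto simp: algebra_simps)
  finally show ?thesis
    using act_point_int_pow_translation[where \<gamma> = \<gamma>, OF g tg, of n "s - of_int (m * n)"] g h
    by (simp add: act_point_mult algebra_simps)
qed

lemma bounded_axis_overlap:
  assumes g: "g \<in> carrier G" and h: "h \<in> carrier G"
    and L1: "T.geodesic_line \<gamma>" and L2: "T.geodesic_line \<eta>"
    and tg: "\<And>s. act_point g (\<gamma> s) = \<gamma> (s + of_int m)" and "m \<noteq> 0"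
    and th: "\<And>s. act_point h (\<eta> s) = \<eta> (s + of_int n)" and "n \<noteq> 0"
    and no_common_power: "\<not> (\<exists>(i::int) (j::int). g [^] i = h [^] j \<and> g [^] i \<noteq> \<one>)"
    and near1: "tdist ET (\<gamma> u1) (\<eta> v1) \<le> \<epsilon>" and near2: "tdist ET (\<gamma> u2) (\<eta> v2) \<le> \<epsilon>"
    and "u1 \<le> u2"
  shows "u2 - u1 \<le> 2 * \<epsilon> + 2 * \<bar>of_int (m * n)\<bar> + real \<kappa> + 4"
proof (rule ccontr)
  define N :: real where "N = \<bar>of_int (m * n)\<bar>"
  assume "\<not> ?thesis"
  then have long: "2 * \<epsilon> + 2 * N + real \<kappa> + 4 < u2 - u1" unfolding N_def by simp
  then obtain e c where e: "e = 1 \<or> e = -1"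
    and ov: "\<And>s. u1 + \<epsilon> < s \<Longrightarrow> s < u2 - \<epsilon> \<Longrightarrow> \<gamma> s = \<eta> (c + e * s)"
    using T.close_lines_overlap[OF L1 L2 near1 near2] N_def by fastforce
  define ei :: int where "ei = (if e = 1 then 1 else -1)"
  have ei: "ei = 1 \<or> ei = -1" "of_int ei = e" using e unfolding ei_def by auto
  define k where "k = g [^] n \<otimes> h [^] (- (ei * m))"
  have fixed: "act_point k (\<gamma> s) = \<gamma> s" if "u1 + \<epsilon> + N < s" "s < u2 - \<epsilon> - N" for s
    unfolding k_def using that ov ei
    by (intro overlap_fixed_pointwise[where \<gamma> = \<gamma> and \<eta> = \<eta>, OF g h tg th ei(1),
          of "u1 + \<epsilon>" "u2 - \<epsilon>" c])
      (auto simp: N_def)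
  define s where "s = u1 + \<epsilon> + N + 1"
  have "k = \<one>"
  proof (rule fixes_far_points_trivial)
    show "k \<in> carrier G" unfolding k_def using g h by simp
    show "act_point k (\<gamma> s) = \<gamma> s" "act_point k (\<gamma> (s + real \<kappa> + 3)) = \<gamma> (s + real \<kappa> + 3)"
      using fixed long N_def unfolding s_def by auto
    show "real \<kappa> + 3 \<le> tdist ET (\<gamma> s) (\<gamma> (s + real \<kappa> + 3))"
      using T.geodesic_lineD(2)[OF L1] by simp
  qed (use T.geodesic_lineD(1)[OF L1] in auto)
  then have "inv (h [^] (- (ei * m))) = g [^] n" using g h unfolding k_def
    by (intro inv_equality) auto
  then have "g [^] n = h [^] (ei * m)" using h by (simp add: int_pow_neg)
  moreover have "g [^] n \<noteq> \<one>"
    using int_pow_translation_nontrivial[OF g L1 tg] \<open>m \<noteq> 0\<close> \<open>n \<noteq> 0\<close> by simp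
  ultimately show False using no_common_power by blast
qed


lemma bounded_axis_overlap_abs:
  assumes "g \<in> carrier G" "h \<in> carrier G" "T.geodesic_line \<gamma>" "T.geodesic_line \<eta>"
    "\<And>s. act_point g (\<gamma> s) = \<gamma> (s + of_int m)" "m \<noteq> 0"
    "\<And>s. act_point h (\<eta> s) = \<eta> (s + of_int n)" "n \<noteq> 0"
    "\<not> (\<exists>(i::int) (j::int). g [^] i = h [^] j \<and> g [^] i \<noteq> \<one>)"
    "tdist ET (\<gamma> u1) (\<eta> v1) \<le> \<epsilon>" "tdist ET (\<gamma> u2) (\<eta> v2) \<le> \<epsilon>"
  shows "\<bar>u2 - u1\<bar> \<le> 2 * \<epsilon> + 2 * \<bar>of_int (m * n)\<bar> + real \<kappa> + 4"
  using bounded_axis_overlap[OF assms(1-11)] bounded_axis_overlap[OF assms(1-9) assms(11,10)]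
  by (cases "u1 \<le> u2") auto
end

section \<open>Orbits in a graph projecting to the tree\<close>

locale tree_projection = acylindrical_tree_action G \<phi> ET \<kappa> + X: graph_action G \<psi> EXg
  for G :: "('g, 'm) monoid_scheme" (structure) and \<phi> and ET and \<kappa>
    and \<psi> :: "'g \<Rightarrow> 'a \<Rightarrow> 'a" and EXg +
  fixes \<pi> :: "'a \<Rightarrow> 'b \<Rightarrow> real"
  assumes X_connected_graph: "connected_graph EXg"
    and \<pi>_lipschitz: "tdist ET (\<pi> x) (\<pi> y) \<le> real (gdist EXg x y)"
    and \<pi>_equivariant: "g \<in> carrier G \<Longrightarrow> \<pi> (\<psi> g x) = act_point g (\<pi> x)"
begin

sublocale XG: connected_graph EXg by (rule X_connected_graph)

text \<open>Unlike the displacement of the chosen \<open>x\<^sub>0\<close>, this depends only on the conjugacy class of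
  \<open>g\<close>, so it may enter the constant of the main theorem.\<close>

definition axis_displacement :: "'g \<Rightarrow> nat" where
  "axis_displacement g = (LEAST n. \<exists>x A. is_axis G \<phi> ET g A \<and> \<pi> x \<in> A \<and> n = XG.d (\<psi> g x) x)"

lemma minimal_displacement_le_axis_displacement:
  assumes k: "k \<in> carrier G" and g0: "g0 \<in> carrier G" and g: "g = k \<otimes> g0 \<otimes> inv k"
    and lox: "loxodromic G \<phi> ET g" and A: "is_axis G \<phi> ET g A" and x0: "\<pi> x0 \<in> A"
    and x0_min: "\<forall>x. \<pi> x \<in> A \<longrightarrow> XG.d (\<psi> g x0) x0 \<le> XG.d (\<psi> g x) x"
  shows "XG.d (\<psi> g x0) x0 \<le> axis_displacement g0"
proof -
  have gc: "g \<in> carrier G" using g k g0 by simp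
  have g0_eq: "inv k \<otimes> g \<otimes> inv (inv k) = g0"
    using g k g0 by (simp add: m_assoc[symmetric]) (simp add: m_assoc)
  have "is_axis G \<phi> ET (inv k \<otimes> g \<otimes> inv (inv k)) (act_point (inv k) ` A)"
    by (rule axis_conj[OF gc _ A]) (use k in simp)
  then have "is_axis G \<phi> ET g0 (act_point (inv k) ` A)" by (simp only: g0_eq)
  moreover have "\<pi> (\<psi> (inv k) x0) \<in> act_point (inv k) ` A"
    using \<pi>_equivariant[of "inv k" x0] k x0 by simp
  ultimately have "\<exists>n x A. is_axis G \<phi> ET g0 A \<and> \<pi> x \<in> A \<and> n = XG.d (\<psi> g0 x) x" by blast
  then have "\<exists>x A. is_axis G \<phi> ET g0 A \<and> \<pi> x \<in> A \<and> axis_displacement g0 = XG.d (\<psi> g0 x) x"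
    unfolding axis_displacement_def by (rule LeastI_ex)
  then obtain x A0 where A0: "is_axis G \<phi> ET g0 A0" "\<pi> x \<in> A0"
    and disp: "axis_displacement g0 = XG.d (\<psi> g0 x) x" by blast
  have "is_axis G \<phi> ET g (act_point k ` A0)" using axis_conj[OF g0 k A0(1)] g by simp
  then have "act_point k ` A0 = A" using axis_unique[OF gc lox _ A] by blast
  moreover have "\<pi> (\<psi> k x) = act_point k (\<pi> x)" by (rule \<pi>_equivariant[OF k])
  ultimately have "\<pi> (\<psi> k x) \<in> A" using A0(2) by blast
  then have "XG.d (\<psi> g x0) x0 \<le> XG.d (\<psi> g (\<psi> k x)) (\<psi> k x)" using x0_min by blast
  also have "\<psi> g (\<psi> k x) = \<psi> k (\<psi> g0 x)" using g k g0 by (simp add: X.act_mult m_assoc)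
  finally show ?thesis using X.gdist_act[OF X_connected_graph k] disp by simp
qed

lemma orbit_over_axis:
  assumes g: "g \<in> carrier G" and lox: "loxodromic G \<phi> ET g" and A: "is_axis G \<phi> ET g A"
    and x0: "\<pi> x0 \<in> A"
  obtains \<gamma> m s where "T.geodesic_line \<gamma>" "m \<noteq> 0" "\<And>t. act_point g (\<gamma> t) = \<gamma> (t + of_int m)"
    "\<And>i. \<pi> (\<psi> (g [^] (i::int)) x0) = \<gamma> (s + of_int i * of_int m)"
    "\<bar>of_int m\<bar> \<le> real (XG.d (\<psi> g x0) x0)"
proof -
  obtain \<gamma> where \<gamma>: "T.geodesic_line \<gamma>" "A = range \<gamma>" using axis_geodesic_line[OF A] by blast
  obtain m :: int where m: "m \<noteq> 0" "\<And>t. act_point g (\<gamma> t) = \<gamma> (t + of_int m)"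
    using axis_translation[OF g lox \<gamma>(1)] A \<gamma>(2) unfolding is_axis_def by blast
  obtain s where s: "\<pi> x0 = \<gamma> s" using x0 \<gamma>(2) by blast
  have orbit: "\<pi> (\<psi> (g [^] (i::int)) x0) = \<gamma> (s + of_int i * of_int m)" for i
    using \<pi>_equivariant[of "g [^] i" x0] act_point_int_pow_translation[where \<gamma> = \<gamma>, OF g m(2)] g s
    by simp
  have "\<bar>of_int m\<bar> = tdist ET (\<pi> x0) (\<pi> (\<psi> g x0))"
    using T.geodesic_lineD(2)[OF \<gamma>(1)] s m(2) \<pi>_equivariant[OF g] by simp
  also have "\<dots> \<le> real (XG.d (\<psi> g x0) x0)" using \<pi>_lipschitz XG.d_sym by metis
  finally show ?thesis using that \<gamma>(1) m orbit by blast
qed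

text \<open>Orbit points of \<open>h\<close> that are \<open>\<epsilon>\<close>-close to orbit points \<open>g\<^sup>m\<^sup>1 x\<^sub>0\<close>, \<open>g\<^sup>m\<^sup>2 x\<^sub>0\<close> project
  near a common stretch of the two axes, so \<open>bounded_axis_overlap\<close> bounds \<open>\<bar>m\<^sub>2 - m\<^sub>1\<bar>\<close>.\<close>

lemma close_orbit_indices:
  assumes g: "g \<in> carrier G" and h: "h \<in> carrier G"
    and lox_g: "loxodromic G \<phi> ET g" and lox_h: "loxodromic G \<phi> ET h"
    and A: "is_axis G \<phi> ET g A" and B: "is_axis G \<phi> ET h B"
    and no_common_power: "\<not> (\<exists>(i::int) (j::int). g [^] i = h [^] j \<and> g [^] i \<noteq> \<one>)"
    and x0: "\<pi> x0 \<in> A" and y0: "\<pi> y0 \<in> B"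
    and near1: "real (XG.d (\<psi> (h [^] (n1::int)) y0) (\<psi> (g [^] (m1::int)) x0)) \<le> \<epsilon>"
    and near2: "real (XG.d (\<psi> (h [^] (n2::int)) y0) (\<psi> (g [^] (m2::int)) x0)) \<le> \<epsilon>"
  shows "\<bar>real_of_int (m2 - m1)\<bar>
    \<le> 2 * \<epsilon> + 2 * (real (XG.d (\<psi> g x0) x0) * translation_length h) + real \<kappa> + 4"
proof -
  obtain \<gamma> m s where \<gamma>: "T.geodesic_line \<gamma>" "m \<noteq> 0" "\<And>t. act_point g (\<gamma> t) = \<gamma> (t + of_int m)"
    "\<And>i. \<pi> (\<psi> (g [^] (i::int)) x0) = \<gamma> (s + of_int i * of_int m)"
    "\<bar>of_int m\<bar> \<le> real (XG.d (\<psi> g x0) x0)"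
    by (rule orbit_over_axis[OF g lox_g A x0]) blast
  obtain \<eta> n t where \<eta>: "T.geodesic_line \<eta>" "n \<noteq> 0" "\<And>t. act_point h (\<eta> t) = \<eta> (t + of_int n)"
    "\<And>j. \<pi> (\<psi> (h [^] (j::int)) y0) = \<eta> (t + of_int j * of_int n)"
    by (rule orbit_over_axis[OF h lox_h B y0]) blast
  have near: "tdist ET (\<gamma> (s + of_int i * of_int m)) (\<eta> (t + of_int j * of_int n)) \<le> \<epsilon>"
    if "real (XG.d (\<psi> (h [^] j) y0) (\<psi> (g [^] i) x0)) \<le> \<epsilon>" for i j :: int
  proof -
    have "tdist ET (\<pi> (\<psi> (g [^] i) x0)) (\<pi> (\<psi> (h [^] j) y0)) \<le> real (XG.d (\<psi> (g [^] i) x0) (\<psi> (h [^] j) y0))"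
      by (rule \<pi>_lipschitz)
    then show ?thesis using that \<gamma>(4) \<eta>(4) XG.d_sym by simp
  qed
  define u1 where "u1 = s + of_int m1 * of_int m"
  define u2 where "u2 = s + of_int m2 * of_int m"
  have "\<bar>u2 - u1\<bar> \<le> 2 * \<epsilon> + 2 * \<bar>real_of_int (m * n)\<bar> + real \<kappa> + 4"
    using bounded_axis_overlap_abs[OF g h \<gamma>(1) \<eta>(1) \<gamma>(3) \<gamma>(2) \<eta>(3) \<eta>(2) no_common_power
        near[OF near1] near[OF near2]] unfolding u1_def u2_def .
  moreover have "1 \<le> \<bar>m\<bar>" using \<gamma>(2) by linarith
  then have "1 \<le> \<bar>real_of_int m\<bar>" by (metis of_int_1_le_iff of_int_abs)
  then have "\<bar>real_of_int (m2 - m1)\<bar> \<le> \<bar>u2 - u1\<bar>"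
    using mult_left_mono[of 1 "\<bar>real_of_int m\<bar>" "\<bar>real_of_int (m2 - m1)\<bar>"]
    unfolding u1_def u2_def by (simp add: abs_mult left_diff_distrib[symmetric])
  moreover have "\<bar>real_of_int (m * n)\<bar> \<le> real (XG.d (\<psi> g x0) x0) * translation_length h"
    using \<gamma>(5) translation_length_axis[OF h \<eta>(1,3)] \<eta>(2) by (simp add: abs_mult mult_right_mono)
  ultimately show ?thesis by linarith
qed

lemma orbit_distance_bound:
  assumes g: "g \<in> carrier G" and "h \<in> carrier G"
    and "loxodromic G \<phi> ET g" "loxodromic G \<phi> ET h"
    and "is_axis G \<phi> ET g A" "is_axis G \<phi> ET h B"
    and "\<not> (\<exists>(i::int) (j::int). g [^] i = h [^] j \<and> g [^] i \<noteq> \<one>)"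
    and "\<pi> x0 \<in> A" "\<pi> y0 \<in> B"
    and near1: "real (XG.d (\<psi> (h [^] (n1::int)) y0) (\<psi> (g [^] (m1::int)) x0)) \<le> \<epsilon>"
    and near2: "real (XG.d (\<psi> (h [^] (n2::int)) y0) (\<psi> (g [^] (m2::int)) x0)) \<le> \<epsilon>"
  shows "real (XG.d (\<psi> (h [^] n1) y0) (\<psi> (h [^] n2) y0))
    \<le> 2 * \<epsilon> + (2 * \<epsilon> + 2 * (real (XG.d (\<psi> g x0) x0) * translation_length h) + real \<kappa> + 4)
        * real (XG.d (\<psi> g x0) x0)"
    (is "_ \<le> 2 * \<epsilon> + ?L * ?c")
proof -
  have "real (XG.d (\<psi> (g [^] m1) x0) (\<psi> (g [^] m2) x0)) \<le> \<bar>real_of_int (m2 - m1)\<bar> * ?c"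
    using X.gdist_int_pow_orbit[OF X_connected_graph g] X.gdist_act_int_pow_le[OF X_connected_graph g]
      XG.d_sym by metis
  also have "\<dots> \<le> ?L * ?c"
    using close_orbit_indices[OF assms] by (simp add: mult_right_mono)
  finally have "real (XG.d (\<psi> (g [^] m1) x0) (\<psi> (g [^] m2) x0)) \<le> ?L * ?c" .
  moreover have "XG.d (\<psi> (h [^] n1) y0) (\<psi> (h [^] n2) y0)
      \<le> XG.d (\<psi> (h [^] n1) y0) (\<psi> (g [^] m1) x0) + XG.d (\<psi> (g [^] m1) x0) (\<psi> (g [^] m2) x0)
        + XG.d (\<psi> (h [^] n2) y0) (\<psi> (g [^] m2) x0)"
    using XG.d_triangle[of "\<psi> (h [^] n1) y0" "\<psi> (h [^] n2) y0" "\<psi> (g [^] m1) x0"]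
      XG.d_triangle[of "\<psi> (g [^] m1) x0" "\<psi> (h [^] n2) y0" "\<psi> (g [^] m2) x0"]
      XG.d_sym[of "\<psi> (g [^] m2) x0" "\<psi> (h [^] n2) y0"] by linarith
  then have "real (XG.d (\<psi> (h [^] n1) y0) (\<psi> (h [^] n2) y0))
      \<le> real (XG.d (\<psi> (h [^] n1) y0) (\<psi> (g [^] m1) x0)) + real (XG.d (\<psi> (g [^] m1) x0) (\<psi> (g [^] m2) x0))
        + real (XG.d (\<psi> (h [^] n2) y0) (\<psi> (g [^] m2) x0))"
    by (simp only: of_nat_add[symmetric] of_nat_le_iff)
  ultimately show ?thesis using near1 near2 by linarith
qed

lemma conjugate_orbits_close_diam_bound:
  assumes g0: "g0 \<in> carrier G" and h0: "h0 \<in> carrier G" and \<epsilon>: "0 \<le> \<epsilon>"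
    and k1: "k1 \<in> carrier G" and k2: "k2 \<in> carrier G"
    and g: "g = k1 \<otimes> g0 \<otimes> inv k1" and h: "h = k2 \<otimes> h0 \<otimes> inv k2"
    and lox_g: "loxodromic G \<phi> ET g" and lox_h: "loxodromic G \<phi> ET h"
    and A: "is_axis G \<phi> ET g A" and B: "is_axis G \<phi> ET h B"
    and no_common_power: "\<not> (\<exists>(i::int) (j::int). g [^] i = h [^] j \<and> g [^] i \<noteq> \<one>)"
    and x0: "\<pi> x0 \<in> A" and x0_min: "\<forall>x. \<pi> x \<in> A \<longrightarrow> XG.d (\<psi> g x0) x0 \<le> XG.d (\<psi> g x) x"
    and y0: "\<pi> y0 \<in> B"
  shows "graph_diam EXg {y \<in> {\<psi> (h [^] n) y0 | n :: int. True}.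
      \<exists>a \<in> {\<psi> (g [^] n) x0 | n :: int. True}. real (XG.d y a) \<le> \<epsilon>}
    \<le> ereal (2 * \<epsilon> + (2 * \<epsilon> + 2 * (real (axis_displacement g0) * translation_length h0) + real \<kappa> + 4)
        * real (axis_displacement g0))"
  unfolding graph_diam_def
proof (intro SUP_least, unfold ereal_less_eq(3))
  fix y1 y2 assume "y1 \<in> {y \<in> {\<psi> (h [^] n) y0 | n :: int. True}.
      \<exists>a \<in> {\<psi> (g [^] n) x0 | n :: int. True}. real (XG.d y a) \<le> \<epsilon>}"
    "y2 \<in> {y \<in> {\<psi> (h [^] n) y0 | n :: int. True}.
      \<exists>a \<in> {\<psi> (g [^] n) x0 | n :: int. True}. real (XG.d y a) \<le> \<epsilon>}"
  then obtain n1 m1 n2 m2 :: int where y: "y1 = \<psi> (h [^] n1) y0" "y2 = \<psi> (h [^] n2) y0"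
    and near: "real (XG.d (\<psi> (h [^] n1) y0) (\<psi> (g [^] m1) x0)) \<le> \<epsilon>"
      "real (XG.d (\<psi> (h [^] n2) y0) (\<psi> (g [^] m2) x0)) \<le> \<epsilon>" by blast
  define c where "c = real (XG.d (\<psi> g x0) x0)"
  define C where "C = real (axis_displacement g0)"
  have gc: "g \<in> carrier G" and hc: "h \<in> carrier G" using g h g0 h0 k1 k2 by simp_all
  have "c \<le> C" unfolding c_def C_def
    using minimal_displacement_le_axis_displacement[OF k1 g0 g lox_g A x0 x0_min] by simp
  moreover have "translation_length h = translation_length h0"
    using translation_length_conj[OF k2 h0] h by simp
  moreover have "0 \<le> translation_length h" by (rule translation_length_nonneg[OF hc])
  ultimately have "(2 * \<epsilon> + 2 * (c * translation_length h) + real \<kappa> + 4) * c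
      \<le> (2 * \<epsilon> + 2 * (C * translation_length h0) + real \<kappa> + 4) * C"
    using \<epsilon> by (intro mult_mono add_mono) (auto simp: c_def mult_right_mono)
  then show "real (XG.d y1 y2) \<le> 2 * \<epsilon> + (2 * \<epsilon> + 2 * (C * translation_length h0) + real \<kappa> + 4) * C"
    using orbit_distance_bound[OF gc hc lox_g lox_h A B no_common_power x0 y0 near]
    unfolding y c_def by linarith
qed

end

theorem lemma2p7:
  fixes G :: "('g, 'm) monoid_scheme"
    and \<phi> :: "'g \<Rightarrow> 'b \<Rightarrow> 'b" and ET :: "'b \<Rightarrow> 'b \<Rightarrow> bool"
    and \<psi> :: "'g \<Rightarrow> 'a \<Rightarrow> 'a" and EXg :: "'a \<Rightarrow> 'a \<Rightarrow> bool"
    and \<pi> :: "'a \<Rightarrow> ('b \<Rightarrow> real)"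
    and \<kappa> :: nat and g0 h0 :: 'g and \<epsilon> :: real
  assumes "group G" and "torsion_free G"
    and "simplicial_tree ET" and "graph_aut_action G \<phi> ET" and "acylindrical G \<phi> ET \<kappa>"
    and "sym_graph EXg" and "gconnected EXg" and "graph_aut_action G \<psi> EXg"
    and "\<forall>x. \<pi> x \<in> realization ET"
    and "\<forall>x y. tdist ET (\<pi> x) (\<pi> y) \<le> real (gdist EXg x y)"
    and "\<forall>g\<in>carrier G. \<forall>x. \<pi> (\<psi> g x) = act_pt G \<phi> g (\<pi> x)"
    and "g0 \<in> carrier G" and "h0 \<in> carrier G"
    and "\<epsilon> > 0"
  shows "\<exists>K::real. \<forall>g h k1 k2 \<alpha>g \<alpha>h x0 y0.
     k1 \<in> carrier G \<and> k2 \<in> carrier G \<and>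
     g = k1 \<otimes>\<^bsub>G\<^esub> g0 \<otimes>\<^bsub>G\<^esub> inv\<^bsub>G\<^esub> k1 \<and>
     h = k2 \<otimes>\<^bsub>G\<^esub> h0 \<otimes>\<^bsub>G\<^esub> inv\<^bsub>G\<^esub> k2 \<and>
     loxodromic G \<phi> ET g \<and> loxodromic G \<phi> ET h \<and>
     is_axis G \<phi> ET g \<alpha>g \<and> is_axis G \<phi> ET h \<alpha>h \<and>
     \<not> (\<exists>(m::int) (n::int). g [^]\<^bsub>G\<^esub> m = h [^]\<^bsub>G\<^esub> n \<and> g [^]\<^bsub>G\<^esub> m \<noteq> \<one>\<^bsub>G\<^esub>) \<and>
     \<pi> x0 \<in> \<alpha>g \<and>
     (\<forall>x. \<pi> x \<in> \<alpha>g \<longrightarrow> gdist EXg (\<psi> g x0) x0 \<le> gdist EXg (\<psi> g x) x) \<and>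
     \<pi> y0 \<in> \<alpha>h
     \<longrightarrow> graph_diam EXg
           {y \<in> {\<psi> (h [^]\<^bsub>G\<^esub> n) y0 | n :: int. True}.
              \<exists>a \<in> {\<psi> (g [^]\<^bsub>G\<^esub> n) x0 | n :: int. True}. real (gdist EXg y a) \<le> \<epsilon>}
         \<le> ereal K"
proof -
  have "tree_projection G \<phi> ET \<kappa> \<psi> EXg \<pi>"
    using assms
    unfolding tree_projection_def tree_projection_axioms_def acylindrical_tree_action_def
      acylindrical_tree_action_axioms_def graph_action_def graph_action_axioms_def connected_graph_def
    by auto
  then interpret tree_projection G \<phi> ET \<kappa> \<psi> EXg \<pi> .
  show ?thesis
    by (intro exI allI impI, elim conjE,
        rule conjugate_orbits_close_diam_bound[OF assms(12,13) less_imp_le[OF assms(14)]])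
      assumption+
qed

end
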